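(* Let $G=\langle S\mid R\rangle$ be a finite group presentation. If $G$ is $k$-chordal with respect to $S$ for some $k$, then $\langle S\mid R\rangle$ admits a recursive isoperimetric function; consequently, $\langle S\mid R\rangle$ has solvable word problem.
   Context: $S$ and $R\subseteq F(S)$ are finite, $F(S)$ the free group on $S$, and $S^{\pm1}=S\cup S^{-1}\setminus\{e\}$. For $\omega\in F(S)$ representing the identity of $G$, its area $A(\omega)$ is the least $m$ such that $\omega=\prod_{i=1}^m u_ir_i^{\varepsilon_i}u_i^{-1}$ in $F(S)$ with $u_i\in F(S)$, $r_i\in R$, $\varepsilon_i\in\{\pm1\}$. The Dehn function is $\mathrm{Dehn}(n)=\max\{A(\omega):\omega\in\langle\langle R\rangle\rangle,\ |\omega|\le n\}$, where $\langle\langle R\rangle\rangle$ is the normal closure of $R$ in $F(S)$ and $|\omega|$ the word length. An isoperimetric function is a non-decreasing $f:\mathbb{N}\to\mathbb{R}$ with $\mathrm{Dehn}\le f$. A relation $s_1\cdots s_n=e$ in $G$ with $n>2$, $s_i\in S^{\pm1}$, is simple if $s_p\cdots s_q=e$ holds exactly when $(p,q)=(1,n)$. $G$ is $k$-chordal with respect to $S$ if for every simple relation $s_1\cdots s_n=e$ with $n\ge k$ there exist $1\le i<j\le n$ and $s'_1,\dots,s'_r\in S^{\pm1}$ with $s_i\cdots s_j=s'_1\cdots s'_r$ and $r\le\min\{j-i,\,n-j+i-2\}$. *)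

theory Defs
  imports Main "HOL-Library.Nat_Bijection"
begin

text \<open>A letter (a, True) stands for the generator a, (a, False) for its inverse.
  Elements of F(S) are represented by words (lists of letters) up to free equivalence.\<close>

type_synonym 'a word = "('a \<times> bool) list"

definition letters :: "'a set \<Rightarrow> ('a \<times> bool) set" where
  "letters S = S \<times> UNIV"

definition flip :: "'a \<times> bool \<Rightarrow> 'a \<times> bool" where
  "flip x = (fst x, \<not> snd x)"

definition winv :: "'a word \<Rightarrow> 'a word" where
  "winv w = rev (map flip w)"

inductive red1 :: "'a word \<Rightarrow> 'a word \<Rightarrow> bool" where
  "red1 (xs @ [x, flip x] @ ys) (xs @ ys)"

definition free_eq :: "'a word \<Rightarrow> 'a word \<Rightarrow> bool" where
  "free_eq u v = equivclp red1 u v"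

definition conjr :: "'a word \<times> 'a word \<times> bool \<Rightarrow> 'a word" where
  "conjr c = (case c of (u, r, e) \<Rightarrow> u @ (if e then r else winv r) @ winv u)"

definition is_prod_conj :: "'a set \<Rightarrow> 'a word set \<Rightarrow> 'a word \<Rightarrow> nat \<Rightarrow> bool" where
  "is_prod_conj S R w m = (\<exists>cs. length cs = m \<and>
      (\<forall>(u, r, e) \<in> set cs. u \<in> lists (letters S) \<and> r \<in> R) \<and>
      free_eq w (concat (map conjr cs)))"

definition in_ncl :: "'a set \<Rightarrow> 'a word set \<Rightarrow> 'a word \<Rightarrow> bool" where
  "in_ncl S R w = (w \<in> lists (letters S) \<and> (\<exists>m. is_prod_conj S R w m))"

definition area :: "'a set \<Rightarrow> 'a word set \<Rightarrow> 'a word \<Rightarrow> nat" where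
  "area S R w = (LEAST m. is_prod_conj S R w m)"

definition dehn :: "'a set \<Rightarrow> 'a word set \<Rightarrow> nat \<Rightarrow> nat" where
  "dehn S R n = Max {area S R w | w. in_ncl S R w \<and> length w \<le> n}"

definition G_eq :: "'a set \<Rightarrow> 'a word set \<Rightarrow> 'a word \<Rightarrow> 'a word \<Rightarrow> bool" where
  "G_eq S R u v = in_ncl S R (u @ winv v)"

text \<open>Subword s_p ... s_q (1-based, inclusive).\<close>
definition subw :: "'b list \<Rightarrow> nat \<Rightarrow> nat \<Rightarrow> 'b list" where
  "subw s p q = take (Suc q - p) (drop (p - 1) s)"

definition simple_rel :: "'a set \<Rightarrow> 'a word set \<Rightarrow> 'a word \<Rightarrow> bool" where
  "simple_rel S R s = (s \<in> lists (letters S) \<and> length s > 2 \<and>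
     (\<forall>p q. 1 \<le> p \<and> p \<le> q \<and> q \<le> length s \<longrightarrow>
        (G_eq S R (subw s p q) [] \<longleftrightarrow> (p = 1 \<and> q = length s))))"

definition chordal :: "'a set \<Rightarrow> 'a word set \<Rightarrow> nat \<Rightarrow> bool" where
  "chordal S R k = (\<forall>s. simple_rel S R s \<and> length s \<ge> k \<longrightarrow>
     (\<exists>i j s'. 1 \<le> i \<and> i < j \<and> j \<le> length s \<and> s' \<in> lists (letters S) \<and>
        int (length s') \<le> min (int j - int i) (int (length s) - int j + int i - 2) \<and>
        G_eq S R (subw s i j) s'))"

datatype recf = Zr | Sc | Id nat | Cn recf "recf list" | Pr recf recf | Mn recf

inductive reval :: "recf \<Rightarrow> nat list \<Rightarrow> nat \<Rightarrow> bool" where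
  "reval Zr xs 0"
| "reval Sc [x] (Suc x)"
| "i < length xs \<Longrightarrow> reval (Id i) xs (xs ! i)"
| "list_all2 (\<lambda>g y. reval g xs y) gs ys \<Longrightarrow> reval f ys z \<Longrightarrow> reval (Cn f gs) xs z"
| "reval f xs y \<Longrightarrow> reval (Pr f g) (0 # xs) y"
| "reval (Pr f g) (n # xs) y \<Longrightarrow> reval g (n # y # xs) z \<Longrightarrow> reval (Pr f g) (Suc n # xs) z"
| "reval f (n # xs) 0 \<Longrightarrow> (\<forall>m<n. \<exists>y. y > 0 \<and> reval f (m # xs) y) \<Longrightarrow> reval (Mn f) xs n"

definition total_recursive :: "(nat \<Rightarrow> nat) \<Rightarrow> bool" where
  "total_recursive f = (\<exists>t. \<forall>x. reval t [x] (f x))"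

definition decidable_set :: "nat set \<Rightarrow> bool" where
  "decidable_set A = total_recursive (\<lambda>x. if x \<in> A then 1 else 0)"

definition word_code :: "('a \<Rightarrow> nat) \<Rightarrow> 'a word \<Rightarrow> nat" where
  "word_code idx w = list_encode (map (\<lambda>(a, b). 2 * idx a + (if b then 1 else 0)) w)"

definition solvable_word_problem :: "'a set \<Rightarrow> 'a word set \<Rightarrow> bool" where
  "solvable_word_problem S R = (\<forall>idx. inj_on idx S \<longrightarrow>
     decidable_set (word_code idx ` {w. in_ncl S R w}))"

definition isoperimetric :: "'a set \<Rightarrow> 'a word set \<Rightarrow> (nat \<Rightarrow> nat) \<Rightarrow> bool" where
  "isoperimetric S R f = (mono f \<and> (\<forall>n. dehn S R n \<le> f n))"

end

theory Submission
  imports Defs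
begin

text \<open>A trivial word \<open>w\<close> of length at least \<open>max k 3\<close> splits as \<open>w = x y z\<close> where \<open>y\<close> equals a
  strictly shorter word \<open>s\<close> in \<open>G\<close> and \<open>x s z\<close> is strictly shorter than \<open>w\<close>: either a proper
  subword of \<open>w\<close> is already trivial (and \<open>s\<close> is empty), or \<open>w\<close> is a simple relation and
  \<open>k\<close>-chordality provides \<open>s\<close>. Since \<open>Area(x y z) \<le> Area(y s\<^sup>-\<^sup>1) + Area(x s z)\<close>, induction on the
  length gives \<open>Area(w) \<le> C 2\<^sup>|\<^sup>w\<^sup>|\<close>, where \<open>C\<close> bounds the areas of the finitely many short trivial
  words, and \<open>n \<mapsto> C 2\<^sup>n\<close> is recursive.

  The same splitting decides the word problem: \<open>w\<close> is trivial iff it is one of finitely many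
  short trivial words, or it splits as above with \<open>y s\<^sup>-\<^sup>1\<close> and \<open>x s z\<close> trivial, both shorter than
  \<open>w\<close>. Coding words in base \<open>B\<close> behind a leading digit \<open>1\<close> makes shorter words have smaller
  codes, so triviality is a course-of-values recursion whose steps are bounded searches, hence
  recursive.\<close>

declare One_nat_def [simp del]

section \<open>Words and products of conjugates\<close>

lemma flip_flip [simp]: "flip (flip x) = x"
  by (simp add: flip_def)

lemma winv_Nil [simp]: "winv [] = []"
  by (simp add: winv_def)

lemma winv_Cons [simp]: "winv (x # w) = winv w @ [flip x]"
  by (simp add: winv_def)

lemma winv_append [simp]: "winv (u @ v) = winv v @ winv u"
  by (simp add: winv_def)

lemma winv_winv [simp]: "winv (winv w) = w"
  by (simp add: winv_def rev_map comp_def)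

lemma length_winv [simp]: "length (winv w) = length w"
  by (simp add: winv_def)

lemma flip_in_letters: "x \<in> letters S \<Longrightarrow> flip x \<in> letters S"
  by (auto simp: letters_def flip_def)

lemma winv_in_lists: "w \<in> lists (letters S) \<Longrightarrow> winv w \<in> lists (letters S)"
  unfolding winv_def in_lists_conv_set by (simp add: flip_in_letters)

lemma free_eq_refl [simp]: "free_eq u u"
  by (simp add: free_eq_def)

lemma free_eq_sym: "free_eq u v \<Longrightarrow> free_eq v u"
  unfolding free_eq_def by (rule equivclp_sym)

lemma free_eq_trans [trans]: "free_eq u v \<Longrightarrow> free_eq v w \<Longrightarrow> free_eq u w"
  unfolding free_eq_def by (rule equivclp_trans)

lemma free_eq_image:
  assumes "\<And>u v. red1 u v \<Longrightarrow> red1 (g u) (g v)" and "free_eq u v"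
  shows "free_eq (g u) (g v)"
  using assms(2) unfolding free_eq_def
proof (induction rule: equivclp_induct)
  case (step v w)
  then show ?case using assms(1) by (meson equivclp_into_equivclp)
qed simp

lemma red1_context: "red1 u v \<Longrightarrow> red1 (p @ u @ q) (p @ v @ q)"
proof (induction rule: red1.induct)
  case (1 xs x ys)
  have "red1 ((p @ xs) @ [x, flip x] @ (ys @ q)) ((p @ xs) @ (ys @ q))" by (rule red1.intros)
  then show ?case by simp
qed

lemma red1_winv: "red1 u v \<Longrightarrow> red1 (winv u) (winv v)"
proof (induction rule: red1.induct)
  case (1 xs x ys)
  have "red1 (winv ys @ [x, flip x] @ winv xs) (winv ys @ winv xs)" by (rule red1.intros)
  then show ?case by simp
qed

lemma free_eq_context: "free_eq u v \<Longrightarrow> free_eq (p @ u @ q) (p @ v @ q)"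
  by (rule free_eq_image[where g = "\<lambda>w. p @ w @ q"]) (auto intro: red1_context)

lemma free_eq_winv: "free_eq u v \<Longrightarrow> free_eq (winv u) (winv v)"
  by (rule free_eq_image[where g = winv]) (auto intro: red1_winv)

lemma free_eq_append: "free_eq u u' \<Longrightarrow> free_eq v v' \<Longrightarrow> free_eq (u @ v) (u' @ v')"
  using free_eq_context[of u u' "[]" v] free_eq_context[of v v' u' "[]"] free_eq_trans by auto

lemma free_eq_winv_cancel: "free_eq (p @ winv v @ v @ q) (p @ q)"
proof -
  have "free_eq (winv v @ v) []"
  proof (induction v)
    case (Cons x v)
    have "red1 (winv v @ [flip x, flip (flip x)] @ v) (winv v @ v)" by (rule red1.intros)
    then have "free_eq (winv (x # v) @ x # v) (winv v @ v)" unfolding free_eq_def by auto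
    then show ?case using Cons.IH by (rule free_eq_trans)
  qed simp
  then show ?thesis using free_eq_context by fastforce
qed

lemma free_eq_cancel_winv: "free_eq (p @ v @ winv v @ q) (p @ q)"
  using free_eq_winv_cancel[of p "winv v" q] by simp

lemma is_prod_conj_free_eq: "is_prod_conj S R u m \<Longrightarrow> free_eq u v \<Longrightarrow> is_prod_conj S R v m"
  unfolding is_prod_conj_def using free_eq_sym free_eq_trans by blast

lemma is_prod_conj_Nil: "is_prod_conj S R [] 0"
  unfolding is_prod_conj_def by auto

lemma is_prod_conj_append:
  assumes "is_prod_conj S R u m" and "is_prod_conj S R v n"
  shows "is_prod_conj S R (u @ v) (m + n)"
proof -
  obtain cs ds where "length cs = m" "\<forall>(p, r, e)\<in>set cs. p \<in> lists (letters S) \<and> r \<in> R"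
      "free_eq u (concat (map conjr cs))"
    and "length ds = n" "\<forall>(p, r, e)\<in>set ds. p \<in> lists (letters S) \<and> r \<in> R"
      "free_eq v (concat (map conjr ds))"
    using assms unfolding is_prod_conj_def by blast
  then show ?thesis
    unfolding is_prod_conj_def by (intro exI[of _ "cs @ ds"]) (auto intro: free_eq_append)
qed

lemma conjr_conjugate: "conjr (p @ u, r, e) = p @ conjr (u, r, e) @ winv p"
  by (simp add: conjr_def)

lemma free_eq_conjugate_concat:
  "free_eq (p @ concat (map conjr cs) @ winv p)
     (concat (map conjr (map (\<lambda>(u, r, e). (p @ u, r, e)) cs)))"
proof (induction cs)
  case Nil
  show ?case using free_eq_cancel_winv[of "[]" p "[]"] by simp
next
  case (Cons c cs)
  obtain u r e where c: "c = (u, r, e)" by (cases c)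
  have "free_eq (p @ conjr c @ concat (map conjr cs) @ winv p)
      ((p @ conjr c @ winv p) @ p @ concat (map conjr cs) @ winv p)"
    using free_eq_sym[OF free_eq_winv_cancel[of "p @ conjr c" p "concat (map conjr cs) @ winv p"]]
    by simp
  also have "free_eq \<dots>
      ((p @ conjr c @ winv p) @ concat (map conjr (map (\<lambda>(u, r, e). (p @ u, r, e)) cs)))"
    using free_eq_context[OF Cons.IH, of "p @ conjr c @ winv p" "[]"] by simp
  finally show ?case
    using c by (simp add: conjr_conjugate)
qed

lemma is_prod_conj_conjugate:
  assumes "p \<in> lists (letters S)" and "is_prod_conj S R w m"
  shows "is_prod_conj S R (p @ w @ winv p) m"
proof -
  obtain cs where cs: "length cs = m" "\<forall>(u, r, e)\<in>set cs. u \<in> lists (letters S) \<and> r \<in> R"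
      "free_eq w (concat (map conjr cs))"
    using assms(2) unfolding is_prod_conj_def by blast
  have "free_eq (p @ w @ winv p) (p @ concat (map conjr cs) @ winv p)"
    by (rule free_eq_context[OF cs(3)])
  also note free_eq_conjugate_concat
  finally have
    "free_eq (p @ w @ winv p) (concat (map conjr (map (\<lambda>(u, r, e). (p @ u, r, e)) cs)))" .
  moreover have "\<forall>(u, r, e)\<in>set (map (\<lambda>(u, r, e). (p @ u, r, e)) cs). u \<in> lists (letters S) \<and> r \<in> R"
    using cs(2) assms(1) by fastforce
  ultimately show ?thesis
    unfolding is_prod_conj_def using cs(1)
    by (intro exI[of _ "map (\<lambda>(u, r, e). (p @ u, r, e)) cs"]) simp
qed

lemma is_prod_conj_winv:
  assumes "is_prod_conj S R w m"
  shows "is_prod_conj S R (winv w) m"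
proof -
  obtain cs where cs: "length cs = m" "\<forall>(u, r, e)\<in>set cs. u \<in> lists (letters S) \<and> r \<in> R"
      "free_eq w (concat (map conjr cs))"
    using assms unfolding is_prod_conj_def by blast
  have "winv (concat (map conjr cs)) = concat (map conjr (rev (map (\<lambda>(u, r, e). (u, r, \<not> e)) cs)))"
    by (induction cs) (auto simp: conjr_def)
  then show ?thesis
    unfolding is_prod_conj_def using cs free_eq_winv[OF cs(3)]
    by (intro exI[of _ "rev (map (\<lambda>(u, r, e). (u, r, \<not> e)) cs)"]) auto
qed

text \<open>The product \<open>(x y s\<^sup>-\<^sup>1 x\<^sup>-\<^sup>1) (x s z)\<close> freely reduces to \<open>x y z\<close>.\<close>

lemma is_prod_conj_replace:
  assumes "x \<in> lists (letters S)"
    and "is_prod_conj S R (y @ winv s) m" and "is_prod_conj S R (x @ s @ z) n"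
  shows "is_prod_conj S R (x @ y @ z) (m + n)"
proof -
  have "is_prod_conj S R ((x @ (y @ winv s) @ winv x) @ (x @ s @ z)) (m + n)"
    by (rule is_prod_conj_append[OF is_prod_conj_conjugate[OF assms(1,2)] assms(3)])
  moreover have "free_eq ((x @ (y @ winv s) @ winv x) @ (x @ s @ z)) (x @ y @ winv s @ s @ z)"
    using free_eq_winv_cancel[of "x @ y @ winv s" x "s @ z"] by simp
  moreover have "free_eq (x @ y @ winv s @ s @ z) (x @ y @ z)"
    using free_eq_winv_cancel[of "x @ y" s z] by simp
  ultimately show ?thesis using is_prod_conj_free_eq free_eq_trans by blast
qed

lemma area_is_prod_conj: "in_ncl S R w \<Longrightarrow> is_prod_conj S R w (area S R w)"
  unfolding in_ncl_def area_def by (auto intro: LeastI_ex)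

lemma area_le: "is_prod_conj S R w m \<Longrightarrow> area S R w \<le> m"
  unfolding area_def by (rule Least_le)

lemma area_replace_le:
  assumes "x @ y @ z \<in> lists (letters S)" and "in_ncl S R (y @ winv s)" and "in_ncl S R (x @ s @ z)"
  shows "in_ncl S R (x @ y @ z)"
    and "area S R (x @ y @ z) \<le> area S R (y @ winv s) + area S R (x @ s @ z)"
proof -
  have "is_prod_conj S R (x @ y @ z) (area S R (y @ winv s) + area S R (x @ s @ z))"
    by (rule is_prod_conj_replace[OF _ area_is_prod_conj[OF assms(2)]
          area_is_prod_conj[OF assms(3)]])
       (use assms(1) in simp)
  then show "in_ncl S R (x @ y @ z)"
    and "area S R (x @ y @ z) \<le> area S R (y @ winv s) + area S R (x @ s @ z)"
    using assms(1) by (auto simp: in_ncl_def intro: area_le)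
qed

lemma in_ncl_replace:
  assumes "s \<in> lists (letters S)" and "in_ncl S R (y @ winv s)" and "in_ncl S R (x @ y @ z)"
  shows "in_ncl S R (x @ s @ z)"
proof -
  have "is_prod_conj S R (s @ winv y) (area S R (y @ winv s))"
    using is_prod_conj_winv[OF area_is_prod_conj[OF assms(2)]] by simp
  moreover have "s @ winv y \<in> lists (letters S)"
    using assms(1,3) winv_in_lists[of y S] by (simp add: in_ncl_def)
  ultimately have "in_ncl S R (s @ winv y)" by (auto simp: in_ncl_def)
  moreover have "x @ s @ z \<in> lists (letters S)" using assms(1,3) by (simp add: in_ncl_def)
  ultimately show ?thesis using area_replace_le(1)[of x s z S R y] assms(3) by simp
qed

section \<open>Chordal presentations\<close>

lemma subw_split:
  assumes "1 \<le> p" and "p \<le> q" and "q \<le> length w"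
  shows "w = take (p - 1) w @ subw w p q @ drop q w" and "length (subw w p q) = Suc q - p"
proof -
  have "take (p - 1) w @ subw w p q = take (p - 1 + (Suc q - p)) w"
    unfolding subw_def by (simp add: take_add)
  also have "p - 1 + (Suc q - p) = q" using assms by simp
  finally show "w = take (p - 1) w @ subw w p q @ drop q w"
    by (metis append.assoc append_take_drop_id)
  show "length (subw w p q) = Suc q - p" unfolding subw_def using assms by simp
qed

lemma chordal_split:
  assumes chordal: "chordal S R k" and w: "in_ncl S R w" and len: "max k 3 \<le> length w"
  obtains x y z s where "w = x @ y @ z" "s \<in> lists (letters S)" "length s < length y"
    "length s + length y < length w" "in_ncl S R (y @ winv s)" "in_ncl S R (x @ s @ z)"
proof -
  note result = that
  have split: "thesis" if "1 \<le> p" "p \<le> q" "q \<le> length w" "s \<in> lists (letters S)"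
    "length s < Suc q - p" "length s + (Suc q - p) < length w" "G_eq S R (subw w p q) s" for p q s
  proof (rule result)
    note w_split = subw_split[OF that(1-3)]
    show "w = take (p - 1) w @ subw w p q @ drop q w" by (rule w_split(1))
    show "in_ncl S R (subw w p q @ winv s)" using that(7) by (simp add: G_eq_def)
    then show "in_ncl S R (take (p - 1) w @ s @ drop q w)"
      using in_ncl_replace[OF that(4)] w w_split(1) by metis
  qed (use that subw_split[OF that(1-3)] in simp_all)
  show ?thesis
  proof (cases "simple_rel S R w")
    case True
    moreover have "k \<le> length w" using len by simp
    ultimately obtain i j s where "1 \<le> i" "i < j" "j \<le> length w" "s \<in> lists (letters S)"
      "int (length s) \<le> min (int j - int i) (int (length w) - int j + int i - 2)"
      "G_eq S R (subw w i j) s"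
      using chordal unfolding chordal_def by blast
    then show ?thesis by (intro split[of i j s]) auto
  next
    case False
    moreover have "w \<in> lists (letters S)" "2 < length w" "G_eq S R (subw w 1 (length w)) []"
      using w len by (auto simp: in_ncl_def G_eq_def subw_def)
    ultimately obtain p q where "1 \<le> p" "p \<le> q" "q \<le> length w" "\<not> (p = 1 \<and> q = length w)"
      "G_eq S R (subw w p q) []"
      unfolding simple_rel_def by blast
    then show ?thesis by (intro split[of p q "[]"]) auto
  qed
qed

lemma finite_in_ncl_length_le:
  assumes "finite S"
  shows "finite {w. in_ncl S R w \<and> length w \<le> n}"
proof -
  have "{w. in_ncl S R w \<and> length w \<le> n} \<subseteq> {w. set w \<subseteq> letters S \<and> length w \<le> n}"
    by (auto simp: in_ncl_def in_lists_conv_set)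
  then show ?thesis
    using finite_lists_length_le[of "letters S"] assms
    by (auto simp: letters_def intro: finite_subset)
qed

lemma area_le_exp:
  assumes "finite S" and "chordal S R k"
  obtains C where "\<And>w. in_ncl S R w \<Longrightarrow> area S R w \<le> C * 2 ^ length w"
proof -
  define C where "C = Max (insert 1 (area S R ` {w. in_ncl S R w \<and> length w \<le> max k 3}))"
  have C: "1 \<le> C" "in_ncl S R w \<Longrightarrow> length w < max k 3 \<Longrightarrow> area S R w \<le> C" for w
    using finite_in_ncl_length_le[OF assms(1), of R "max k 3"] unfolding C_def by auto
  have "area S R w \<le> C * 2 ^ length w" if "in_ncl S R w" for w
    using that
  proof (induction "length w" arbitrary: w rule: less_induct)
    case less
    show ?case
    proof (cases "length w < max k 3")
      case True
      then have "area S R w \<le> C" using C(2)[OF less.prems] by simp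
      also have "\<dots> \<le> C * 2 ^ length w" by simp
      finally show ?thesis .
    next
      case False
      then have "max k 3 \<le> length w" by (simp only: not_less)
      then obtain x y z s where xyzs: "w = x @ y @ z" "s \<in> lists (letters S)" "length s < length y"
        "length s + length y < length w" "in_ncl S R (y @ winv s)" "in_ncl S R (x @ s @ z)"
        by (rule chordal_split[OF assms(2) less.prems])
      then have shorter: "length (y @ winv s) \<le> length w - 1" "length (x @ s @ z) \<le> length w - 1"
        by auto
      have "area S R w \<le> area S R (y @ winv s) + area S R (x @ s @ z)"
        using area_replace_le(2)[OF _ xyzs(5,6)] less.prems xyzs(1) by (simp add: in_ncl_def)
      also have "\<dots> \<le> C * 2 ^ length (y @ winv s) + C * 2 ^ length (x @ s @ z)"
        by (intro add_mono less.hyps) (use xyzs in auto)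
      also have "\<dots> \<le> C * 2 ^ (length w - 1) + C * 2 ^ (length w - 1)"
        using shorter by (intro add_mono mult_le_mono2 power_increasing) auto
      also have "\<dots> = C * 2 ^ length w"
        using xyzs(4) by (cases "length w") auto
      finally show ?thesis .
    qed
  qed
  then show ?thesis by (rule that)
qed

lemma dehn_le:
  assumes "finite S" and "mono f" and "\<And>w. in_ncl S R w \<Longrightarrow> area S R w \<le> f (length w)"
  shows "dehn S R n \<le> f n"
proof -
  have "finite {w. in_ncl S R w \<and> length w \<le> n}"
    by (rule finite_in_ncl_length_le[OF assms(1)])
  moreover have "in_ncl S R []" unfolding in_ncl_def using is_prod_conj_Nil by auto
  moreover have "area S R w \<le> f n" if "in_ncl S R w" "length w \<le> n" for w
    using assms(3)[OF that(1)] monoD[OF assms(2) that(2)] by simp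
  ultimately show ?thesis
    unfolding dehn_def by (intro Max.boundedI) (auto simp: setcompr_eq_image)
qed

section \<open>Computable functions\<close>

definition computable :: "nat \<Rightarrow> (nat list \<Rightarrow> nat) \<Rightarrow> bool" where
  "computable n f \<longleftrightarrow> (\<exists>t. \<forall>xs. length xs = n \<longrightarrow> reval t xs (f xs))"

lemma computable_cong:
  assumes "computable n f" and "\<And>xs. length xs = n \<Longrightarrow> f xs = g xs"
  shows "computable n g"
  using assms unfolding computable_def by metis

lemma total_recursive_iff_computable:
  "total_recursive f \<longleftrightarrow> computable 1 (\<lambda>xs. f (xs ! 0))"
proof
  assume "total_recursive f"
  then obtain t where "\<forall>x. reval t [x] (f x)" unfolding total_recursive_def by blast
  then show "computable 1 (\<lambda>xs. f (xs ! 0))"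
    unfolding computable_def
  proof (intro exI allI impI)
    fix xs :: "nat list" assume "length xs = 1"
    then obtain x where "xs = [x]" by (cases xs) auto
    with \<open>\<forall>x. reval t [x] (f x)\<close> show "reval t xs (f (xs ! 0))" by simp
  qed
next
  assume "computable 1 (\<lambda>xs. f (xs ! 0))"
  then obtain t where t: "\<forall>xs. length xs = 1 \<longrightarrow> reval t xs (f (xs ! 0))"
    unfolding computable_def by blast
  have "reval t [x] (f x)" for x using t[rule_format, of "[x]"] by simp
  then show "total_recursive f" unfolding total_recursive_def by blast
qed

lemma computable_nth: "i < n \<Longrightarrow> computable n (\<lambda>xs. xs ! i)"
  unfolding computable_def by (auto intro: reval.intros(3))

lemma computable_compose:
  assumes f: "computable (length gs) f" and gs: "\<forall>g\<in>set gs. computable n g"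
  shows "computable n (\<lambda>xs. f (map (\<lambda>g. g xs) gs))"
proof -
  have "\<exists>ts. list_all2 (\<lambda>g t. \<forall>xs. length xs = n \<longrightarrow> reval t xs (g xs)) gs ts"
    using gs
  proof (induction gs)
    case (Cons g gs)
    then obtain t ts where "\<forall>xs. length xs = n \<longrightarrow> reval t xs (g xs)"
      and "list_all2 (\<lambda>g t. \<forall>xs. length xs = n \<longrightarrow> reval t xs (g xs)) gs ts"
      unfolding computable_def by auto
    then show ?case by (intro exI[of _ "t # ts"]) simp
  qed (intro exI[of _ "[]"], simp)
  then obtain ts where ts: "list_all2 (\<lambda>g t. \<forall>xs. length xs = n \<longrightarrow> reval t xs (g xs)) gs ts" ..
  obtain tf where tf: "\<forall>xs. length xs = length gs \<longrightarrow> reval tf xs (f xs)"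
    using f unfolding computable_def by auto
  have "reval (Cn tf ts) xs (f (map (\<lambda>g. g xs) gs))" if "length xs = n" for xs
  proof (rule reval.intros)
    show "list_all2 (\<lambda>t y. reval t xs y) ts (map (\<lambda>g. g xs) gs)"
      using ts that by (auto simp: list_all2_conv_all_nth)
  qed (use tf in simp)
  then show ?thesis unfolding computable_def by blast
qed

lemma computable_compose_vector:
  assumes "computable m f"
    and "\<And>i. i < m \<Longrightarrow> computable n (\<lambda>xs. g xs ! i)"
    and "\<And>xs. length xs = n \<Longrightarrow> length (g xs) = m"
  shows "computable n (\<lambda>xs. f (g xs))"
proof -
  have "computable n (\<lambda>xs. f (map (\<lambda>h. h xs) (map (\<lambda>i xs. g xs ! i) [0..<m])))"
    by (rule computable_compose) (use assms in auto)
  moreover have "map (\<lambda>h. h xs) (map (\<lambda>i xs. g xs ! i) [0..<m]) = g xs" if "length xs = n" for xs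
    by (rule nth_equalityI) (simp_all add: assms(3)[OF that])
  ultimately show ?thesis
    by (auto elim!: computable_cong)
qed

lemma computable_compose1:
  "computable 1 (\<lambda>xs. f (xs ! 0)) \<Longrightarrow> computable n g \<Longrightarrow> computable n (\<lambda>xs. f (g xs))"
  using computable_compose[of "[g]" "\<lambda>xs. f (xs ! 0)"] by (simp add: One_nat_def)

lemma computable_compose2:
  "computable 2 (\<lambda>xs. f (xs ! 0) (xs ! 1)) \<Longrightarrow> computable n g \<Longrightarrow> computable n h \<Longrightarrow>
    computable n (\<lambda>xs. f (g xs) (h xs))"
  using computable_compose[of "[g, h]" "\<lambda>xs. f (xs ! 0) (xs ! 1)"] by (simp add: numeral_2_eq_2)

lemma computable_Suc: "computable 1 (\<lambda>xs. Suc (xs ! 0))"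
proof -
  have "reval Sc xs (Suc (xs ! 0))" if "length xs = 1" for xs
    using that by (cases xs) (auto intro: reval.intros)
  then show ?thesis unfolding computable_def by blast
qed

lemma computable_const: "computable n (\<lambda>_. c)"
proof (induction c)
  case 0
  show ?case unfolding computable_def by (auto intro: reval.intros(1))
next
  case (Suc c)
  show ?case using computable_compose1[OF computable_Suc Suc] .
qed

primrec iter :: "nat \<Rightarrow> (nat \<Rightarrow> nat \<Rightarrow> nat) \<Rightarrow> nat \<Rightarrow> nat" where
  "iter b s 0 = b"
| "iter b s (Suc k) = s k (iter b s k)"

lemma computable_iter:
  assumes "computable n b" and "computable (Suc (Suc n)) s"
  shows "computable (Suc n) (\<lambda>xs. iter (b (tl xs)) (\<lambda>k r. s (k # r # tl xs)) (hd xs))"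
proof -
  obtain tb where tb: "\<forall>xs. length xs = n \<longrightarrow> reval tb xs (b xs)"
    using assms(1) unfolding computable_def by auto
  obtain ts where ts: "\<forall>xs. length xs = Suc (Suc n) \<longrightarrow> reval ts xs (s xs)"
    using assms(2) unfolding computable_def by auto
  have "reval (Pr tb ts) (k # ys) (iter (b ys) (\<lambda>k r. s (k # r # ys)) k)"
    if "length ys = n" for k ys
    by (induction k) (use tb ts that in \<open>auto intro: reval.intros(5,6)\<close>)
  then have "reval (Pr tb ts) xs (iter (b (tl xs)) (\<lambda>k r. s (k # r # tl xs)) (hd xs))"
    if "length xs = Suc n" for xs
    using that by (cases xs) auto
  then show ?thesis unfolding computable_def by blast
qed

lemma computable_push:
  assumes "computable (Suc n) f" and "computable n g"
  shows "computable n (\<lambda>xs. f (g xs # xs))"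
proof (rule computable_compose_vector[OF assms(1)])
  show "computable n (\<lambda>xs. (g xs # xs) ! i)" if "i < Suc n" for i
    using that assms(2) by (cases i) (auto intro: computable_nth)
qed simp

lemma computable_add: "computable 2 (\<lambda>xs. xs ! 0 + xs ! 1)"
proof -
  have "computable (Suc (Suc 1)) (\<lambda>xs. Suc (xs ! 1))"
    by (rule computable_compose1[OF computable_Suc computable_nth]) simp
  from computable_iter[OF computable_nth[of 0 1, simplified] this]
  have "computable (Suc 1) (\<lambda>xs. iter (tl xs ! 0) (\<lambda>k r. Suc r) (hd xs))"
    by simp
  moreover have "iter y (\<lambda>k r. Suc r) x = x + y" for x y
    by (induction x) auto
  ultimately show ?thesis
    by (auto simp: numeral_2_eq_2 length_Suc_conv elim!: computable_cong)
qed

lemma computable_bounded_sum: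
  assumes f: "computable (Suc n) f" and b: "computable n b"
  shows "computable n (\<lambda>xs. \<Sum>y<b xs. f (y # xs))"
proof -
  have "computable (Suc (Suc n)) (\<lambda>ys. f (ys ! 0 # drop 2 ys))"
  proof (rule computable_compose_vector[OF f])
    show "computable (Suc (Suc n)) (\<lambda>ys. (ys ! 0 # drop 2 ys) ! i)" if "i < Suc n" for i
    proof (cases i)
      case (Suc j)
      with that have "computable (Suc (Suc n)) (\<lambda>ys. ys ! Suc (Suc j))"
        by (intro computable_nth) simp
      then show ?thesis using Suc by (auto elim!: computable_cong)
    qed (auto intro: computable_nth)
  qed simp
  with computable_compose2[OF computable_add computable_nth[of 1 "Suc (Suc n)"]]
  have "computable (Suc (Suc n)) (\<lambda>ys. ys ! 1 + f (ys ! 0 # drop 2 ys))"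
    by simp
  then have "computable (Suc n)
      (\<lambda>xs. iter 0 (\<lambda>k r. (k # r # tl xs) ! 1 + f ((k # r # tl xs) ! 0 # drop 2 (k # r # tl xs)))
        (hd xs))"
    by (rule computable_iter[OF computable_const])
  moreover have "iter 0 (\<lambda>k r. r + f (k # ys)) m = (\<Sum>y<m. f (y # ys))" for m ys
    by (induction m) auto
  ultimately have "computable (Suc n) (\<lambda>xs. \<Sum>y<hd xs. f (y # tl xs))"
    by simp
  from computable_push[OF this b] show ?thesis
    by simp
qed

text \<open>Expressions in de Bruijn style: \<open>Var i\<close> is the \<open>i\<close>-th entry of the environment,
  \<open>BSum b e\<close> sums \<open>e\<close> over \<open>Var 0 < b\<close>, and \<open>Iter a b s\<close> iterates \<open>s\<close> \<open>a\<close> times starting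
  from \<open>b\<close>, where \<open>s\<close> sees the counter as \<open>Var 0\<close> and the accumulator as \<open>Var 1\<close>.\<close>

datatype aexp = Const nat | Var nat | BSum aexp aexp | Iter aexp aexp aexp
  | Op1 "nat \<Rightarrow> nat" aexp | Op2 "nat \<Rightarrow> nat \<Rightarrow> nat" aexp aexp

primrec aval :: "aexp \<Rightarrow> nat list \<Rightarrow> nat" where
  "aval (Const c) xs = c"
| "aval (Var i) xs = (if i < length xs then xs ! i else 0)"
| "aval (BSum b e) xs = (\<Sum>y<aval b xs. aval e (y # xs))"
| "aval (Iter a b s) xs = iter (aval b xs) (\<lambda>k r. aval s (k # r # xs)) (aval a xs)"
| "aval (Op1 f a) xs = f (aval a xs)"
| "aval (Op2 f a b) xs = f (aval a xs) (aval b xs)"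

primrec computable_ops :: "aexp \<Rightarrow> bool" where
  "computable_ops (Const c) = True"
| "computable_ops (Var i) = True"
| "computable_ops (BSum b e) = (computable_ops b \<and> computable_ops e)"
| "computable_ops (Iter a b s) = (computable_ops a \<and> computable_ops b \<and> computable_ops s)"
| "computable_ops (Op1 f a) = (computable 1 (\<lambda>xs. f (xs ! 0)) \<and> computable_ops a)"
| "computable_ops (Op2 f a b) =
    (computable 2 (\<lambda>xs. f (xs ! 0) (xs ! 1)) \<and> computable_ops a \<and> computable_ops b)"

lemma computable_aval: "computable_ops e \<Longrightarrow> computable n (aval e)"
proof (induction e arbitrary: n)
  case (Const c)
  show ?case using computable_const by simp
next
  case (Var i)
  show ?case
    by (cases "i < n")
       (auto intro: computable_cong[OF computable_nth] computable_cong[OF computable_const])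
next
  case (BSum b e)
  then show ?case using computable_bounded_sum[of n "aval e" "aval b"] by simp
next
  case (Iter a b s)
  have "computable (Suc n) (\<lambda>xs. iter (aval b (tl xs)) (\<lambda>k r. aval s (k # r # tl xs)) (hd xs))"
    by (rule computable_iter) (use Iter in auto)
  from computable_push[OF this, of "aval a"] show ?case
    using Iter by simp
next
  case (Op1 f a)
  then show ?case using computable_compose1[of f n "aval a"] by simp
next
  case (Op2 f a b)
  then show ?case using computable_compose2[of f n "aval a" "aval b"] by simp
qed

lemma computable1_aexp:
  assumes "computable_ops e" and "\<And>x. aval e [x] = f x"
  shows "computable 1 (\<lambda>xs. f (xs ! 0))"
  by (rule computable_cong[OF computable_aval[OF assms(1)]])
     (auto simp: assms(2) length_Suc_conv One_nat_def)

lemma computable2_aexp: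
  assumes "computable_ops e" and "\<And>x y. aval e [x, y] = f x y"
  shows "computable 2 (\<lambda>xs. f (xs ! 0) (xs ! 1))"
  by (rule computable_cong[OF computable_aval[OF assms(1)]])
     (auto simp: assms(2) numeral_2_eq_2 length_Suc_conv)

lemma computable_sub: "computable 2 (\<lambda>xs. xs ! 0 - xs ! 1)"
proof -
  have iter_pred: "iter 0 (\<lambda>k r. k) x = x - 1" for x
    by (cases x) auto
  have pred: "computable 1 (\<lambda>xs. xs ! 0 - 1)"
    by (rule computable1_aexp[of "Iter (Var 0) (Const 0) (Var 0)"]) (auto simp: iter_pred)
  have "iter x (\<lambda>k r. r - 1) y = x - y" for x y
    by (induction y) auto
  then show ?thesis
    by (intro computable2_aexp[of "Iter (Var 1) (Var 0) (Op1 (\<lambda>x. x - 1) (Var 1))"])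
       (auto simp: pred)
qed

lemma computable_mult: "computable 2 (\<lambda>xs. xs ! 0 * xs ! 1)"
proof -
  have "iter 0 (\<lambda>k r. r + y) x = x * y" for x y
    by (induction x) auto
  then show ?thesis
    by (intro computable2_aexp[of "Iter (Var 0) (Const 0) (Op2 (+) (Var 1) (Var 3))"])
       (auto simp: computable_add)
qed

lemma computable_power: "computable 2 (\<lambda>xs. xs ! 0 ^ xs ! 1)"
proof -
  have "iter 1 (\<lambda>k r. r * x) y = x ^ y" for x y
    by (induction y) auto
  then show ?thesis
    by (intro computable2_aexp[of "Iter (Var 1) (Const 1) (Op2 (*) (Var 1) (Var 2))"])
       (auto simp: computable_mult)
qed

text \<open>Division counts the multiples of \<open>y\<close> up to \<open>x\<close>; the factor in front handles \<open>y = 0\<close>.\<close>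

lemma div_eq_count_multiples:
  "(1 - (1 - y)) * (\<Sum>q<x. 1 - ((q + 1) * y - x)) = x div (y::nat)"
proof (cases "y = 0")
  case False
  have "(\<Sum>q<x. 1 - ((q + 1) * y - x)) = (\<Sum>q<x. if (q + 1) * y \<le> x then 1 else 0)"
    by (rule sum.cong) auto
  also have "\<dots> = card {q \<in> {..<x}. (q + 1) * y \<le> x}"
    by (simp add: sum.inter_filter[symmetric])
  also have "{q \<in> {..<x}. (q + 1) * y \<le> x} = {..<x div y}"
  proof -
    have iff: "(q + 1) * y \<le> x \<longleftrightarrow> q < x div y" for q
      using False less_eq_div_iff_mult_less_eq[of y "q + 1" x] by linarith
    have "x div y \<le> x" by (rule div_le_dividend)
    then show ?thesis
      using iff by (intro set_eqI) (simp only: mem_Collect_eq lessThan_iff, linarith)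
  qed
  finally show ?thesis using False by simp
qed simp

lemma computable_div: "computable 2 (\<lambda>xs. xs ! 0 div xs ! 1)"
  by (rule computable2_aexp[of "Op2 (*) (Op2 (-) (Const 1) (Op2 (-) (Const 1) (Var 1)))
       (BSum (Var 0)
         (Op2 (-) (Const 1) (Op2 (-) (Op2 (*) (Op2 (+) (Var 0) (Const 1)) (Var 2)) (Var 1))))"])
     (auto simp: computable_mult computable_sub computable_add div_eq_count_multiples)

lemma computable_mod: "computable 2 (\<lambda>xs. xs ! 0 mod xs ! 1)"
  by (rule computable2_aexp[of "Op2 (-) (Var 0) (Op2 (*) (Var 1) (Op2 (div) (Var 0) (Var 1)))"])
     (auto simp: computable_mult computable_sub computable_div minus_mult_div_eq_mod)

lemmas computable_arith =
  computable_add computable_sub computable_mult computable_power computable_div computable_mod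

lemma computable_less: "computable 2 (\<lambda>xs. of_bool (xs ! 0 < xs ! 1))"
  by (rule computable2_aexp[of "Op2 (-) (Const 1) (Op2 (-) (Const 1) (Op2 (-) (Var 1) (Var 0)))"])
     (auto simp: computable_arith)

lemma computable_leq: "computable 2 (\<lambda>xs. of_bool (xs ! 0 \<le> xs ! 1))"
  by (rule computable2_aexp[of "Op2 (-) (Const 1) (Op2 (-) (Var 0) (Var 1))"])
     (auto simp: computable_arith)

lemma computable_eq: "computable 2 (\<lambda>xs. of_bool (xs ! 0 = xs ! 1))"
  by (rule computable2_aexp[of "Op2 (*) (Op2 (-) (Const 1) (Op2 (-) (Var 0) (Var 1)))
       (Op2 (-) (Const 1) (Op2 (-) (Var 1) (Var 0)))"])
     (auto simp: computable_arith)

lemma computable_conj: "computable 2 (\<lambda>xs. of_bool (0 < xs ! 0 \<and> 0 < xs ! 1))"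
  by (rule computable2_aexp[of "Op2 (*) (Op2 (-) (Const 1) (Op2 (-) (Const 1) (Var 0)))
       (Op2 (-) (Const 1) (Op2 (-) (Const 1) (Var 1)))"])
     (auto simp: computable_arith)

lemma computable_pos: "computable 1 (\<lambda>xs. of_bool (0 < xs ! 0))"
  by (rule computable1_aexp[of "Op2 (-) (Const 1) (Op2 (-) (Const 1) (Var 0))"])
     (auto simp: computable_arith)

lemma computable_zero: "computable 1 (\<lambda>xs. of_bool (xs ! 0 = 0))"
  by (rule computable1_aexp[of "Op2 (-) (Const 1) (Var 0)"]) (auto simp: computable_arith)

lemma computable_member:
  assumes "finite A"
  shows "computable 1 (\<lambda>xs. of_bool (xs ! 0 \<in> A))"
proof -
  have "x \<in> A \<longleftrightarrow> odd (set_encode A div 2 ^ x)" for x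
    using set_encode_inverse[OF assms] unfolding set_decode_def by blast
  then have "set_encode A div 2 ^ x mod 2 = of_bool (x \<in> A)" for x
    by (simp add: mod_2_eq_odd)
  then show ?thesis
    by (intro computable1_aexp[of "Op2 (mod)
         (Op2 (div) (Const (set_encode A)) (Op2 (^) (Const 2) (Var 0))) (Const 2)"])
       (auto simp: computable_arith)
qed

definition ALess :: "aexp \<Rightarrow> aexp \<Rightarrow> aexp" where
  "ALess a b = Op2 (\<lambda>x y. of_bool (x < y)) a b"

definition ALeq :: "aexp \<Rightarrow> aexp \<Rightarrow> aexp" where
  "ALeq a b = Op2 (\<lambda>x y. of_bool (x \<le> y)) a b"

definition AEq :: "aexp \<Rightarrow> aexp \<Rightarrow> aexp" where
  "AEq a b = Op2 (\<lambda>x y. of_bool (x = y)) a b"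

definition AConj :: "aexp \<Rightarrow> aexp \<Rightarrow> aexp" where
  "AConj a b = Op2 (\<lambda>x y. of_bool (0 < x \<and> 0 < y)) a b"

definition ADisj :: "aexp \<Rightarrow> aexp \<Rightarrow> aexp" where
  "ADisj a b = Op1 (\<lambda>x. of_bool (0 < x)) (Op2 (+) a b)"

definition AEx :: "aexp \<Rightarrow> aexp \<Rightarrow> aexp" where
  "AEx b e = Op1 (\<lambda>x. of_bool (0 < x)) (BSum b e)"

definition AAll :: "aexp \<Rightarrow> aexp \<Rightarrow> aexp" where
  "AAll b e = Op1 (\<lambda>x. of_bool (x = 0)) (BSum b (Op1 (\<lambda>x. of_bool (x = 0)) e))"

lemma computable_ops_logic [simp]:
  "computable_ops (ALess a b) \<longleftrightarrow> computable_ops a \<and> computable_ops b"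
  "computable_ops (ALeq a b) \<longleftrightarrow> computable_ops a \<and> computable_ops b"
  "computable_ops (AEq a b) \<longleftrightarrow> computable_ops a \<and> computable_ops b"
  "computable_ops (AConj a b) \<longleftrightarrow> computable_ops a \<and> computable_ops b"
  "computable_ops (ADisj a b) \<longleftrightarrow> computable_ops a \<and> computable_ops b"
  "computable_ops (AEx b e) \<longleftrightarrow> computable_ops b \<and> computable_ops e"
  "computable_ops (AAll b e) \<longleftrightarrow> computable_ops b \<and> computable_ops e"
  by (auto simp: ALess_def ALeq_def AEq_def AConj_def ADisj_def AEx_def AAll_def computable_less
      computable_leq computable_eq computable_conj computable_pos computable_zero computable_add)

lemma aval_logic [simp]:
  "aval (ALess a b) xs = of_bool (aval a xs < aval b xs)"
  "aval (ALeq a b) xs = of_bool (aval a xs \<le> aval b xs)"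
  "aval (AEq a b) xs = of_bool (aval a xs = aval b xs)"
  "aval (AConj a b) xs = of_bool (0 < aval a xs \<and> 0 < aval b xs)"
  "aval (ADisj a b) xs = of_bool (0 < aval a xs \<or> 0 < aval b xs)"
  "aval (AEx b e) xs = of_bool (\<exists>y<aval b xs. 0 < aval e (y # xs))"
  "aval (AAll b e) xs = of_bool (\<forall>y<aval b xs. 0 < aval e (y # xs))"
proof -
  have sum_pos: "0 < (\<Sum>y<n. f y) \<longleftrightarrow> (\<exists>y<n. 0 < f y)" for n and f :: "nat \<Rightarrow> nat"
    by (induction n) (auto simp: less_Suc_eq)
  show "aval (AEx b e) xs = of_bool (\<exists>y<aval b xs. 0 < aval e (y # xs))"
    by (simp add: AEx_def sum_pos)
  have sum_zero: "(\<Sum>y<n. f y) = 0 \<longleftrightarrow> (\<forall>y<n. f y = 0)" for n and f :: "nat \<Rightarrow> nat"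
    by (induction n) (auto simp: less_Suc_eq)
  show "aval (AAll b e) xs = of_bool (\<forall>y<aval b xs. 0 < aval e (y # xs))"
    unfolding AAll_def aval.simps sum_zero by simp
qed (simp_all add: ALess_def ALeq_def AEq_def AConj_def ADisj_def)

fun AConjs :: "aexp list \<Rightarrow> aexp" where
  "AConjs [] = Const 1"
| "AConjs (e # es) = AConj e (AConjs es)"

lemma computable_ops_AConjs [simp]: "computable_ops (AConjs es) \<longleftrightarrow> (\<forall>e\<in>set es. computable_ops e)"
  by (induction es) auto

lemma aval_AConjs [simp]: "aval (AConjs es) xs = of_bool (\<forall>e\<in>set es. 0 < aval e xs)"
  by (induction es) auto

section \<open>Words as numbers in base \<open>B\<close>\<close>

text \<open>A word \<open>ds\<close> of digits below \<open>B\<close> is coded by the numeral \<open>1 ds\<close> in base \<open>B\<close>. The leading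
  digit makes the code injective, and it makes shorter words have smaller codes.\<close>

definition radix_val :: "nat \<Rightarrow> nat list \<Rightarrow> nat" where
  "radix_val B ds = foldl (\<lambda>a d. a * B + d) 0 ds"

definition radix_code :: "nat \<Rightarrow> nat list \<Rightarrow> nat" where
  "radix_code B ds = foldl (\<lambda>a d. a * B + d) 1 ds"

definition radix_len :: "nat \<Rightarrow> nat \<Rightarrow> nat" where
  "radix_len B v = (\<Sum>l<v. of_bool (B ^ Suc l \<le> v))"

definition radix_digit :: "nat \<Rightarrow> nat \<Rightarrow> nat \<Rightarrow> nat" where
  "radix_digit B v k = v div B ^ (radix_len B v - Suc k) mod B"

definition radix_append :: "nat \<Rightarrow> nat \<Rightarrow> nat \<Rightarrow> nat" where
  "radix_append B u v = u * B ^ radix_len B v + (v - B ^ radix_len B v)"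

definition is_radix_code :: "nat \<Rightarrow> nat set \<Rightarrow> nat \<Rightarrow> bool" where
  "is_radix_code B D v \<longleftrightarrow>
    0 < v \<and> v < 2 * B ^ radix_len B v \<and> (\<forall>k<radix_len B v. radix_digit B v k \<in> D)"

definition radix_reverse_rel :: "nat \<Rightarrow> (nat \<times> nat) set \<Rightarrow> nat \<Rightarrow> nat \<Rightarrow> bool" where
  "radix_reverse_rel B \<Gamma> u v \<longleftrightarrow> radix_len B u = radix_len B v \<and>
    (\<forall>k<radix_len B u. (radix_digit B u (radix_len B u - Suc k), radix_digit B v k) \<in> \<Gamma>)"

lemma foldl_radix:
  "foldl (\<lambda>a d. a * B + d) s ds = s * B ^ length ds + radix_val B ds"
  unfolding radix_val_def
proof (induction ds arbitrary: s)
  case (Cons d ds)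
  have "foldl (\<lambda>a d. a * B + d) s (d # ds) =
      (s * B + d) * B ^ length ds + foldl (\<lambda>a d. a * B + d) 0 ds"
    using Cons.IH[of "s * B + d"] by simp
  moreover have "foldl (\<lambda>a d. a * B + d) 0 (d # ds) =
      d * B ^ length ds + foldl (\<lambda>a d. a * B + d) 0 ds"
    using Cons.IH[of d] by simp
  ultimately show ?case by (simp add: algebra_simps)
qed simp

lemma radix_code_eq: "radix_code B ds = B ^ length ds + radix_val B ds"
  unfolding radix_code_def foldl_radix by simp

lemma radix_val_append: "radix_val B (as @ bs) = radix_val B as * B ^ length bs + radix_val B bs"
  by (simp add: radix_val_def foldl_radix[of B "foldl _ 0 as"])

lemma radix_val_snoc: "radix_val B (ds @ [d]) = radix_val B ds * B + d"
  by (simp add: radix_val_def)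

lemma radix_val_less:
  assumes "\<forall>d\<in>set ds. d < B"
  shows "radix_val B ds < B ^ length ds"
  using assms
proof (induction ds rule: rev_induct)
  case (snoc d ds)
  then have "radix_val B ds + 1 \<le> B ^ length ds" and "d < B" by auto
  then have "(radix_val B ds + 1) * B \<le> B ^ length ds * B" by (intro mult_le_mono1)
  with \<open>d < B\<close> have "radix_val B ds * B + d < B ^ length ds * B"
    by (simp add: algebra_simps)
  then show ?case by (simp add: radix_val_snoc mult.commute)
qed (simp add: radix_val_def)

context
  fixes B :: nat
  assumes B: "2 \<le> B"
begin

lemma radix_len_eqI:
  assumes "B ^ n \<le> v" and "v < B ^ Suc n"
  shows "radix_len B v = n"
proof -
  have "n < 2 ^ n" by (rule less_exp)
  also have "\<dots> \<le> B ^ n" using B by (simp add: power_mono)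
  finally have "n < v" using assms(1) by simp
  have "B ^ Suc l \<le> v \<longleftrightarrow> l < n" for l
  proof
    assume "B ^ Suc l \<le> v"
    then have "B ^ Suc l < B ^ Suc n" using assms(2) by linarith
    then show "l < n" using B power_strict_increasing_iff[of B "Suc l" "Suc n"] by simp
  next
    assume "l < n"
    then have "B ^ Suc l \<le> B ^ n" using B by (intro power_increasing) auto
    then show "B ^ Suc l \<le> v" using assms(1) by simp
  qed
  then have "radix_len B v = card {l \<in> {..<v}. l < n}"
    unfolding radix_len_def by (simp add: sum.inter_filter[symmetric] of_bool_def)
  also have "{l \<in> {..<v}. l < n} = {..<n}" using \<open>n < v\<close> by auto
  finally show ?thesis by simp
qed

lemma radix_code_bounds:
  assumes "\<forall>d\<in>set ds. d < B"
  shows "B ^ length ds \<le> radix_code B ds" and "radix_code B ds < 2 * B ^ length ds"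
  using radix_val_less[OF assms] by (simp_all add: radix_code_eq)

lemma radix_code_less_power:
  assumes "\<forall>d\<in>set ds. d < B"
  shows "radix_code B ds < B ^ Suc (length ds)"
proof -
  have "2 * B ^ length ds \<le> B ^ Suc (length ds)" using B by simp
  then show ?thesis using radix_code_bounds(2)[OF assms] by linarith
qed

lemma radix_len_code: "\<forall>d\<in>set ds. d < B \<Longrightarrow> radix_len B (radix_code B ds) = length ds"
  by (intro radix_len_eqI radix_code_bounds(1) radix_code_less_power)

lemma radix_code_less:
  assumes "\<forall>d\<in>set ds. d < B" "\<forall>d\<in>set es. d < B" and "length ds < length es"
  shows "radix_code B ds < radix_code B es"
proof -
  have "radix_code B ds < B ^ Suc (length ds)" by (rule radix_code_less_power[OF assms(1)])
  also have "\<dots> \<le> B ^ length es" using B assms(3) by (intro power_increasing) auto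
  also have "\<dots> \<le> radix_code B es" by (rule radix_code_bounds(1)[OF assms(2)])
  finally show ?thesis .
qed

lemma radix_digit_code:
  assumes "\<forall>d\<in>set ds. d < B" and "k < length ds"
  shows "radix_digit B (radix_code B ds) k = ds ! k"
proof -
  define as bs where "as = take k ds" and "bs = drop (Suc k) ds"
  have ds: "ds = as @ [ds ! k] @ bs"
    unfolding as_def bs_def using assms(2) by (simp add: id_take_nth_drop)
  have len: "radix_len B (radix_code B ds) - Suc k = length bs"
    using radix_len_code[OF assms(1)] unfolding bs_def by simp
  have bs_less: "radix_val B bs < B ^ length bs"
    by (rule radix_val_less) (use assms(1) in \<open>auto simp: bs_def dest: in_set_dropD\<close>)
  have "length ds = Suc k + length bs"
    using assms(2) by (simp add: bs_def)
  then have "B ^ length ds = B ^ Suc k * B ^ length bs"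
    by (simp only: power_add)
  moreover have "radix_val B ds = radix_val B (as @ [ds ! k]) * B ^ length bs + radix_val B bs"
    using ds radix_val_append by (metis append_assoc)
  ultimately have "radix_code B ds =
      (B ^ Suc k + radix_val B as * B + ds ! k) * B ^ length bs + radix_val B bs"
    by (simp add: radix_code_eq radix_val_snoc algebra_simps)
  moreover have "B ^ length bs \<noteq> 0" using B by simp
  ultimately have "radix_code B ds div B ^ length bs = B ^ Suc k + radix_val B as * B + ds ! k"
    using bs_less by (simp only: div_mult_self3 div_less) simp
  then show ?thesis
    unfolding radix_digit_def len using assms by (simp add: mod_add_left_eq[symmetric])
qed

lemma radix_append_code:
  assumes "\<forall>d\<in>set as. d < B" and "\<forall>d\<in>set bs. d < B"
  shows "radix_append B (radix_code B as) (radix_code B bs) = radix_code B (as @ bs)"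
  unfolding radix_append_def radix_len_code[OF assms(2)]
  by (simp add: radix_code_eq radix_val_append power_add algebra_simps)

lemma radix_code_inj:
  assumes "\<forall>d\<in>set as. d < B" "\<forall>d\<in>set bs. d < B" and "radix_code B as = radix_code B bs"
  shows "as = bs"
proof (rule nth_equalityI)
  show len: "length as = length bs"
    using radix_len_code[OF assms(1)] radix_len_code[OF assms(2)] assms(3) by simp
  show "as ! k = bs ! k" if "k < length as" for k
  proof -
    have "as ! k = radix_digit B (radix_code B as) k" using radix_digit_code[OF assms(1) that] ..
    also have "\<dots> = bs ! k" using radix_digit_code[OF assms(2)] assms(3) len that by simp
    finally show ?thesis .
  qed
qed

lemma radix_val_surj: "r < B ^ n \<Longrightarrow> \<exists>ds. length ds = n \<and> (\<forall>d\<in>set ds. d < B) \<and> radix_val B ds = r"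
proof (induction n arbitrary: r)
  case 0
  then show ?case by (auto simp: radix_val_def)
next
  case (Suc n)
  then have "r div B < B ^ n" using B by (simp add: div_less_iff_less_mult mult.commute)
  then obtain ds where "length ds = n" "\<forall>d\<in>set ds. d < B" "radix_val B ds = r div B"
    using Suc.IH by blast
  then show ?case
    using B by (intro exI[of _ "ds @ [r mod B]"]) (auto simp: radix_val_snoc)
qed

lemma is_radix_code_iff:
  assumes "\<forall>d\<in>D. d < B"
  shows "is_radix_code B D v \<longleftrightarrow> (\<exists>ds. set ds \<subseteq> D \<and> v = radix_code B ds)"
proof
  assume v: "is_radix_code B D v"
  then obtain n where n: "B ^ n \<le> v" "v < B ^ Suc n"
    using ex_power_ivl1[OF B, of v] unfolding is_radix_code_def Suc_eq_plus1 by auto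
  then have "radix_len B v = n" by (rule radix_len_eqI)
  with v have "v < 2 * B ^ n" unfolding is_radix_code_def by simp
  then have "v - B ^ n < B ^ n" by linarith
  then obtain ds where ds: "length ds = n" "\<forall>d\<in>set ds. d < B" "radix_val B ds = v - B ^ n"
    using radix_val_surj by blast
  with n have code: "v = radix_code B ds" by (simp add: radix_code_eq)
  have "ds ! k \<in> D" if "k < length ds" for k
    using v that radix_digit_code[OF ds(2) that] radix_len_code[OF ds(2)]
    unfolding is_radix_code_def code by metis
  then have "set ds \<subseteq> D" by (auto simp: in_set_conv_nth)
  with code show "\<exists>ds. set ds \<subseteq> D \<and> v = radix_code B ds" by blast
next
  assume "\<exists>ds. set ds \<subseteq> D \<and> v = radix_code B ds"
  then obtain ds where ds: "set ds \<subseteq> D" "v = radix_code B ds" by blast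
  then have digits: "\<forall>d\<in>set ds. d < B" using assms by auto
  have "0 < B ^ length ds" using B by simp
  then have "0 < v" using radix_code_bounds(1)[OF digits] ds(2) by linarith
  then show "is_radix_code B D v"
    using ds radix_code_bounds(2)[OF digits] radix_len_code[OF digits] radix_digit_code[OF digits]
    unfolding is_radix_code_def by (auto simp: subset_code(1))
qed

lemma radix_reverse_rel_code:
  assumes "\<forall>d\<in>set ds. d < B" and "\<forall>d\<in>set es. d < B"
  shows "radix_reverse_rel B \<Gamma> (radix_code B ds) (radix_code B es) \<longleftrightarrow>
    list_all2 (\<lambda>d e. (d, e) \<in> \<Gamma>) (rev ds) es"
  unfolding radix_reverse_rel_def radix_len_code[OF assms(1)] radix_len_code[OF assms(2)]
    list_all2_conv_all_nth
  using radix_digit_code[OF assms(1)] radix_digit_code[OF assms(2)]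
  by (auto simp: rev_nth Suc_diff_Suc)

end

lemma computable_radix_len: "computable 1 (\<lambda>xs. radix_len B (xs ! 0))"
  by (rule computable1_aexp[of "BSum (Var 0) (ALeq (Op2 (^) (Const B) (Op1 Suc (Var 0))) (Var 1))"])
     (auto simp: computable_arith computable_Suc radix_len_def)

lemma computable_radix_digit: "computable 2 (\<lambda>xs. radix_digit B (xs ! 0) (xs ! 1))"
  by (rule computable2_aexp[of "Op2 (mod) (Op2 (div) (Var 0)
       (Op2 (^) (Const B) (Op2 (-) (Op1 (radix_len B) (Var 0)) (Op1 Suc (Var 1))))) (Const B)"])
     (auto simp: computable_arith computable_Suc computable_radix_len radix_digit_def)

lemma computable_radix_append: "computable 2 (\<lambda>xs. radix_append B (xs ! 0) (xs ! 1))"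
  by (rule computable2_aexp[of "Op2 (+)
       (Op2 (*) (Var 0) (Op2 (^) (Const B) (Op1 (radix_len B) (Var 1))))
       (Op2 (-) (Var 1) (Op2 (^) (Const B) (Op1 (radix_len B) (Var 1))))"])
     (auto simp: computable_arith computable_radix_len radix_append_def)

lemma computable_is_radix_code:
  assumes "finite D"
  shows "computable 1 (\<lambda>xs. of_bool (is_radix_code B D (xs ! 0)))"
  by (rule computable1_aexp[of "AConj (ALess (Const 0) (Var 0))
       (AConj (ALess (Var 0) (Op2 (*) (Const 2) (Op2 (^) (Const B) (Op1 (radix_len B) (Var 0)))))
        (AAll (Op1 (radix_len B) (Var 0))
          (Op1 (\<lambda>d. of_bool (d \<in> D)) (Op2 (radix_digit B) (Var 1) (Var 0)))))"])
     (auto simp: computable_arith computable_radix_len computable_radix_digit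
       computable_member[OF assms] is_radix_code_def)

lemma computable_prod_encode: "computable 2 (\<lambda>xs. prod_encode (xs ! 0, xs ! 1))"
  by (rule computable2_aexp[of "Op2 (+) (Op2 (div) (Op2 (*) (Op2 (+) (Var 0) (Var 1))
       (Op1 Suc (Op2 (+) (Var 0) (Var 1)))) (Const 2)) (Var 0)"])
     (auto simp: computable_arith computable_Suc prod_encode_def triangle_def)

lemma computable_pair_member:
  assumes "finite \<Gamma>"
  shows "computable 2 (\<lambda>xs. of_bool ((xs ! 0, xs ! 1) \<in> \<Gamma>))"
proof -
  have "computable 2 (\<lambda>xs. of_bool (prod_encode (xs ! 0, xs ! 1) \<in> prod_encode ` \<Gamma>))"
    using computable_compose1[OF computable_member computable_prod_encode] assms by simp
  moreover have "prod_encode p \<in> prod_encode ` \<Gamma> \<longleftrightarrow> p \<in> \<Gamma>" for p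
    by (auto simp: inj_image_mem_iff[OF inj_prod_encode])
  ultimately show ?thesis by simp
qed

lemma computable_radix_reverse_rel:
  assumes "finite \<Gamma>"
  shows "computable 2 (\<lambda>xs. of_bool (radix_reverse_rel B \<Gamma> (xs ! 0) (xs ! 1)))"
  by (rule computable2_aexp[of "AConj (AEq (Op1 (radix_len B) (Var 0)) (Op1 (radix_len B) (Var 1)))
       (AAll (Op1 (radix_len B) (Var 0)) (Op2 (\<lambda>a b. of_bool ((a, b) \<in> \<Gamma>))
         (Op2 (radix_digit B) (Var 1) (Op2 (-) (Op1 (radix_len B) (Var 1)) (Op1 Suc (Var 0))))
         (Op2 (radix_digit B) (Var 2) (Var 0))))"])
     (auto simp: computable_arith computable_Suc computable_radix_len computable_radix_digit
       computable_pair_member[OF assms] radix_reverse_rel_def)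

lemma sum_pair_delta:
  fixes f :: "nat \<Rightarrow> nat \<Rightarrow> nat"
  assumes "fst p < n" and "snd p < n"
  shows "(\<Sum>a<n. \<Sum>b<n. of_bool ((a, b) = p) * f a b) = f (fst p) (snd p)"
proof -
  have "(\<Sum>b<n. of_bool ((a, b) = p) * f a b) = of_bool (a = fst p) * f a (snd p)" for a
    using assms(2)
    by (cases p) (auto simp: of_bool_def if_distrib[of "\<lambda>t. t * _"] sum.delta cong: if_cong)
  then show ?thesis
    using assms(1) by (simp add: of_bool_def if_distrib[of "\<lambda>t. t * _"] sum.delta cong: if_cong)
qed

lemma computable_prod_decode:
  "computable 1 (\<lambda>xs. fst (prod_decode (xs ! 0)))" "computable 1 (\<lambda>xs. snd (prod_decode (xs ! 0)))"
proof -
  have bounds: "fst (prod_decode c) < Suc c" "snd (prod_decode c) < Suc c" for c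
    using le_prod_encode_1[of "fst (prod_decode c)" "snd (prod_decode c)"]
      le_prod_encode_2[of "snd (prod_decode c)" "fst (prod_decode c)"]
    by simp_all
  have pair: "prod_encode (a, b) = c \<longleftrightarrow> (a, b) = prod_decode c" for a b c
    by auto
  have "fst (prod_decode c) = (\<Sum>a<Suc c. \<Sum>b<Suc c. of_bool (prod_encode (a, b) = c) * a)"
    and "snd (prod_decode c) = (\<Sum>a<Suc c. \<Sum>b<Suc c. of_bool (prod_encode (a, b) = c) * b)" for c
    unfolding pair by (simp_all only: sum_pair_delta[OF bounds])
  note sums = this
  show "computable 1 (\<lambda>xs. fst (prod_decode (xs ! 0)))"
    by (rule computable1_aexp[of "BSum (Op1 Suc (Var 0)) (BSum (Op1 Suc (Var 1))
         (Op2 (*) (AEq (Op2 (\<lambda>a b. prod_encode (a, b)) (Var 1) (Var 0)) (Var 2)) (Var 1)))"])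
       (auto simp: computable_arith computable_Suc computable_prod_encode sums(1))
  show "computable 1 (\<lambda>xs. snd (prod_decode (xs ! 0)))"
    by (rule computable1_aexp[of "BSum (Op1 Suc (Var 0)) (BSum (Op1 Suc (Var 1))
         (Op2 (*) (AEq (Op2 (\<lambda>a b. prod_encode (a, b)) (Var 1) (Var 0)) (Var 2)) (Var 0)))"])
       (auto simp: computable_arith computable_Suc computable_prod_encode sums(2))
qed

lemma length_le_list_encode: "length ds \<le> list_encode ds"
  by (induction ds) (use le_prod_encode_2 in \<open>auto intro: le_trans\<close>)

definition drop_code :: "nat \<Rightarrow> nat \<Rightarrow> nat" where
  "drop_code c i = iter c (\<lambda>_ r. snd (prod_decode (r - 1))) i"

lemma drop_code_list_encode: "drop_code (list_encode ds) i = list_encode (drop i ds)"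
proof (induction i)
  case (Suc i)
  have "prod_decode 0 = (0, 0)" by (simp add: prod_decode_def prod_decode_aux.simps)
  with Suc show ?case
    by (cases "drop i ds") (simp_all add: drop_code_def drop_Suc drop_tl flip: tl_drop)
qed (simp add: drop_code_def)

lemma computable_drop_code: "computable 2 (\<lambda>xs. drop_code (xs ! 0) (xs ! 1))"
  by (rule computable2_aexp[of "Iter (Var 1) (Var 0)
       (Op1 (\<lambda>x. snd (prod_decode x)) (Op2 (-) (Var 1) (Const 1)))"])
     (auto simp: computable_arith computable_prod_decode drop_code_def)

text \<open>A list code \<open>c\<close> bounds the length of \<open>list_decode c\<close>, so a fold over the list becomes an
  iteration whose number of steps and whose letters are read off from the codes of its suffixes.\<close>

lemma computable_foldl_list_decode:
  assumes g: "computable 2 (\<lambda>xs. g (xs ! 0) (xs ! 1))"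
  shows "computable 1 (\<lambda>xs. foldl g a (list_decode (xs ! 0)))"
proof -
  define len where "len c = (\<Sum>i<c. of_bool (0 < drop_code c i) :: nat)" for c
  define letter where "letter c i = fst (prod_decode (drop_code c i - 1))" for c i
  have len: "len (list_encode ds) = length ds" for ds
  proof -
    have "0 < list_encode xs \<longleftrightarrow> xs \<noteq> []" for xs :: "nat list"
      by (cases xs) auto
    then have "0 < drop_code (list_encode ds) i \<longleftrightarrow> i < length ds" for i
      by (simp add: drop_code_list_encode not_le)
    then have "len (list_encode ds) = card {i \<in> {..<list_encode ds}. i < length ds}"
      unfolding len_def by (simp add: sum.inter_filter[symmetric] of_bool_def)
    also have "{i \<in> {..<list_encode ds}. i < length ds} = {..<length ds}"
      using length_le_list_encode[of ds] by auto
    finally show ?thesis by simp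
  qed
  have "iter a (\<lambda>i r. g r (letter (list_encode ds) i)) k = foldl g a (take k ds)"
    if "k \<le> length ds" for ds k
    using that
    by (induction k) (auto simp: letter_def drop_code_list_encode take_Suc_conv_app_nth
        simp flip: Cons_nth_drop_Suc)
  then have fold: "iter a (\<lambda>i r. g r (letter c i)) (len c) = foldl g a (list_decode c)" for c
    using len[of "list_decode c"] by (metis list_decode_inverse order_refl take_all)
  have "computable 1 (\<lambda>xs. len (xs ! 0))"
    by (rule computable1_aexp[of "BSum (Var 0) (ALess (Const 0) (Op2 drop_code (Var 1) (Var 0)))"])
       (auto simp: computable_drop_code len_def)
  then show ?thesis
    by (intro computable1_aexp[of "Iter (Op1 len (Var 0)) (Const a) (Op2 g (Var 1)
         (Op1 (\<lambda>x. fst (prod_decode x)) (Op2 (-) (Op2 drop_code (Var 2) (Var 0)) (Const 1))))"])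
       (auto simp: g computable_arith computable_prod_decode computable_drop_code fold[symmetric]
         letter_def)
qed

lemma computable_radix_code_list_decode: "computable 1 (\<lambda>xs. radix_code B (list_decode (xs ! 0)))"
  unfolding radix_code_def
  by (rule computable_foldl_list_decode)
     (rule computable2_aexp[of "Op2 (+) (Op2 (*) (Var 0) (Const B)) (Var 1)"],
      auto simp: computable_arith)

lemma computable_list_decode_subset:
  assumes "finite D"
  shows "computable 1 (\<lambda>xs. of_bool (set (list_decode (xs ! 0)) \<subseteq> D))"
proof -
  have "foldl (\<lambda>a d. a * of_bool (d \<in> D)) a ds = a * of_bool (set ds \<subseteq> D)" for a :: nat and ds
    by (induction ds arbitrary: a) auto
  moreover have "computable 1 (\<lambda>xs. foldl (\<lambda>a d. a * of_bool (d \<in> D)) 1 (list_decode (xs ! 0)))"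
    by (rule computable_foldl_list_decode)
       (rule computable2_aexp[of "Op2 (*) (Var 0) (Op1 (\<lambda>d. of_bool (d \<in> D)) (Var 1))"],
        auto simp: computable_arith computable_member[OF assms])
  ultimately show ?thesis by simp
qed

lemma computable_set_decode_member: "computable 2 (\<lambda>xs. of_bool (xs ! 1 \<in> set_decode (xs ! 0)))"
  by (rule computable2_aexp[of
       "Op2 (mod) (Op2 (div) (Var 0) (Op2 (^) (Const 2) (Var 1))) (Const 2)"])
     (auto simp: computable_arith set_decode_def mod_2_eq_odd)

lemma total_recursive_course_of_values:
  assumes F: "computable 2 (\<lambda>xs. F (xs ! 0) (xs ! 1))"
    and P: "\<And>v. P v \<longleftrightarrow> 0 < F v (set_encode {u. u < v \<and> P u})"
  shows "total_recursive (\<lambda>v. of_bool (P v))"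
proof -
  define H where "H v = iter 0 (\<lambda>k h. h + of_bool (0 < F k h) * 2 ^ k) v" for v
  have H: "H v = set_encode {u. u < v \<and> P u}" for v
  proof (induction v)
    case (Suc v)
    have "H (Suc v) = set_encode {u. u < v \<and> P u} + of_bool (P v) * 2 ^ v"
      using Suc P[of v] by (simp add: H_def)
    also have "\<dots> = set_encode {u. u < Suc v \<and> P u}"
    proof (cases "P v")
      case True
      then have "{u. u < Suc v \<and> P u} = insert v {u. u < v \<and> P u}" by (auto simp: less_Suc_eq)
      with True show ?thesis by simp
    next
      case False
      then have "{u. u < Suc v \<and> P u} = {u. u < v \<and> P u}" by (auto simp: less_Suc_eq)
      with False show ?thesis by simp
    qed
    finally show ?case .
  qed (simp add: H_def)
  have "computable 1 (\<lambda>xs. H (xs ! 0))"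
    by (rule computable1_aexp[of "Iter (Var 0) (Const 0) (Op2 (+) (Var 1)
         (Op2 (*) (ALess (Const 0) (Op2 F (Var 0) (Var 1))) (Op2 (^) (Const 2) (Var 0))))"])
       (auto simp: F computable_arith H_def)
  then have "computable 1 (\<lambda>xs. of_bool (0 < F (xs ! 0) (H (xs ! 0))))"
    by (intro computable1_aexp[of "ALess (Const 0) (Op2 F (Var 0) (Op1 H (Var 0)))"]) (auto simp: F)
  moreover have "(0 < F v (H v)) = P v" for v
    unfolding H using P[of v] by simp
  ultimately show ?thesis
    unfolding total_recursive_iff_computable by (simp only:)
qed

section \<open>Decidability of recursively decomposable languages\<close>

locale decomposable_language =
  fixes A :: "'b set" and inv :: "'b \<Rightarrow> 'b" and code :: "'b \<Rightarrow> nat" and K :: nat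
    and W :: "'b list \<Rightarrow> bool"
  assumes finite_A: "finite A" and inj_code: "inj_on code A" and inv_in_A: "a \<in> A \<Longrightarrow> inv a \<in> A"
    and decompose: "\<lbrakk>w \<in> lists A; K \<le> length w; W w\<rbrakk> \<Longrightarrow> \<exists>x y z s. w = x @ y @ z \<and> s \<in> lists A \<and>
      length s < length y \<and> length s + length y < length w \<and>
      W (y @ rev (map inv s)) \<and> W (x @ s @ z)"
    and compose: "\<lbrakk>x @ y @ z \<in> lists A; s \<in> lists A; W (y @ rev (map inv s)); W (x @ s @ z)\<rbrakk> \<Longrightarrow>
      W (x @ y @ z)"
begin

definition splits :: "'b list \<Rightarrow> bool" where
  "splits w \<longleftrightarrow> (\<exists>x y z s. w = x @ y @ z \<and> s \<in> lists A \<and> length s < length y \<and>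
    length s + length y < length w \<and> W (y @ rev (map inv s)) \<and> W (x @ s @ z))"

lemma W_iff_short_or_splits:
  assumes "w \<in> lists A"
  shows "W w \<longleftrightarrow> length w < K \<and> W w \<or> splits w"
proof
  assume "W w"
  then show "length w < K \<and> W w \<or> splits w"
    using decompose[OF assms] unfolding splits_def by (meson not_le)
next
  assume "length w < K \<and> W w \<or> splits w"
  then show "W w"
    using compose assms unfolding splits_def by blast
qed

definition base :: nat where
  "base = Suc (Max (insert 1 (code ` A)))"

abbreviation wcode :: "'b list \<Rightarrow> nat" where
  "wcode w \<equiv> radix_code base (map code w)"

lemma two_le_base: "2 \<le> base"
  using finite_A by (simp add: base_def)

lemma digits_less_base: "w \<in> lists A \<Longrightarrow> \<forall>d\<in>set (map code w). d < base"
  using finite_A by (auto simp: base_def less_Suc_eq_le)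

lemma radix_len_wcode: "w \<in> lists A \<Longrightarrow> radix_len base (wcode w) = length w"
  using radix_len_code[OF two_le_base digits_less_base] by simp

lemma radix_append_wcode:
  "v \<in> lists A \<Longrightarrow> w \<in> lists A \<Longrightarrow> radix_append base (wcode v) (wcode w) = wcode (v @ w)"
  using radix_append_code[OF two_le_base digits_less_base digits_less_base] by simp

lemma wcode_inj:
  assumes "v \<in> lists A" and "w \<in> lists A" and "wcode v = wcode w"
  shows "v = w"
proof (rule map_inj_on)
  show "map code v = map code w"
    using radix_code_inj[OF two_le_base digits_less_base digits_less_base] assms .
  show "inj_on code (set v \<union> set w)"
    by (rule inj_on_subset[OF inj_code]) (use assms in auto)
qed

lemma wcode_less: "v \<in> lists A \<Longrightarrow> w \<in> lists A \<Longrightarrow> length v < length w \<Longrightarrow> wcode v < wcode w"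
  using radix_code_less[OF two_le_base digits_less_base digits_less_base] by simp

lemma wcode_less_power:
  assumes "w \<in> lists A" and "length w \<le> n"
  shows "wcode w < base ^ Suc n"
proof -
  have "wcode w < base ^ Suc (length w)"
    using radix_code_less_power[OF two_le_base digits_less_base[OF assms(1)]] by simp
  also have "\<dots> \<le> base ^ Suc n"
    using two_le_base assms(2) by (intro power_increasing) auto
  finally show ?thesis .
qed

lemma is_radix_code_iff_wcode: "is_radix_code base (code ` A) v \<longleftrightarrow> (\<exists>w\<in>lists A. v = wcode w)"
proof -
  have "\<forall>d\<in>code ` A. d < base"
    using digits_less_base[of "[_]"] by auto
  then have "is_radix_code base (code ` A) v \<longleftrightarrow> (\<exists>ds\<in>lists (code ` A). v = radix_code base ds)"
    using is_radix_code_iff[OF two_le_base] by (simp add: lists_eq_set)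
  then show ?thesis
    unfolding lists_image by blast
qed

definition inv_pairs :: "(nat \<times> nat) set" where
  "inv_pairs = (\<lambda>x. (code x, code (inv x))) ` A"

lemma radix_reverse_rel_wcode:
  assumes "s \<in> lists A" and "t \<in> lists A"
  shows "radix_reverse_rel base inv_pairs (wcode s) (wcode t) \<longleftrightarrow> t = rev (map inv s)"
proof -
  have pair: "(code a, code b) \<in> inv_pairs \<longleftrightarrow> inv a = b" if "a \<in> A" "b \<in> A" for a b
    using that inj_code inv_in_A unfolding inv_pairs_def by (auto dest: inj_onD)
  have "radix_reverse_rel base inv_pairs (wcode s) (wcode t) \<longleftrightarrow>
      list_all2 (\<lambda>a b. (code a, code b) \<in> inv_pairs) (rev s) t"
    using radix_reverse_rel_code[OF two_le_base digits_less_base[OF assms(1)]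
        digits_less_base[OF assms(2)]]
    by (simp add: list_all2_map1 list_all2_map2 rev_map)
  also have "\<dots> \<longleftrightarrow> list_all2 (\<lambda>a b. inv a = b) (rev s) t"
    by (rule list.rel_cong) (use assms pair in auto)
  also have "\<dots> \<longleftrightarrow> list_all2 (=) (map inv (rev s)) t"
    unfolding list_all2_map1 ..
  also have "\<dots> \<longleftrightarrow> t = rev (map inv s)"
    by (auto simp: list_all2_eq[symmetric] rev_map)
  finally show ?thesis .
qed

definition coded :: "nat \<Rightarrow> bool" where
  "coded v \<longleftrightarrow> (\<exists>w\<in>lists A. v = wcode w \<and> W w)"

lemma coded_wcode: "w \<in> lists A \<Longrightarrow> coded (wcode w) \<longleftrightarrow> W w"
  unfolding coded_def using wcode_inj by blast

definition short_codes :: "nat set" where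
  "short_codes = wcode ` {w \<in> lists A. length w < K \<and> W w}"

lemma finite_short_codes: "finite short_codes"
proof -
  have "{w \<in> lists A. length w < K \<and> W w} \<subseteq> {w. set w \<subseteq> A \<and> length w \<le> K}"
    by (auto simp: in_lists_conv_set)
  then show ?thesis
    unfolding short_codes_def using finite_lists_length_le[OF finite_A]
    by (intro finite_imageI) (rule finite_subset)
qed

lemma wcode_in_short_codes: "w \<in> lists A \<Longrightarrow> wcode w \<in> short_codes \<longleftrightarrow> length w < K \<and> W w"
  unfolding short_codes_def using wcode_inj by blast

text \<open>Every word that is not longer than the word coded by \<open>v\<close> has a code below \<open>code_bound v\<close>.\<close>

definition code_bound :: "nat \<Rightarrow> nat" where
  "code_bound v = base ^ Suc (radix_len base v)"

definition split_codes :: "nat \<Rightarrow> nat \<Rightarrow> nat \<Rightarrow> nat \<Rightarrow> nat \<Rightarrow> nat \<Rightarrow> nat \<Rightarrow> bool" where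
  "split_codes v h x y z s t \<longleftrightarrow> (\<forall>c\<in>{x, y, z, s, t}. is_radix_code base (code ` A) c) \<and>
    v = radix_append base (radix_append base x y) z \<and>
    radix_len base s < radix_len base y \<and> radix_len base s + radix_len base y < radix_len base v \<and>
    radix_reverse_rel base inv_pairs s t \<and>
    radix_append base y t \<in> set_decode h \<and>
    radix_append base (radix_append base x s) z \<in> set_decode h"

text \<open>\<open>coded_step v h\<close> decides whether \<open>v\<close> codes a word of \<open>W\<close> when \<open>h\<close> is the set of codes of
  words of \<open>W\<close> below \<open>v\<close>; the two pieces of a split have smaller codes.\<close>

definition coded_step :: "nat \<Rightarrow> nat \<Rightarrow> bool" where
  "coded_step v h \<longleftrightarrow> is_radix_code base (code ` A) v \<and>
    (radix_len base v < K \<and> v \<in> short_codes \<or>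
     (\<exists>x<code_bound v. \<exists>y<code_bound v. \<exists>z<code_bound v. \<exists>s<code_bound v. \<exists>t<code_bound v.
        split_codes v h x y z s t))"

lemma computable_coded_step: "computable 2 (\<lambda>xs. of_bool (coded_step (xs ! 0) (xs ! 1)))"
proof -
  let ?code = "\<lambda>i. Op1 (\<lambda>c. of_bool (is_radix_code base (code ` A) c)) (Var i)"
  let ?len = "\<lambda>i. Op1 (radix_len base) (Var i)"
  let ?app = "Op2 (radix_append base)"
  let ?mem = "Op2 (\<lambda>h c. of_bool (c \<in> set_decode h))"
  let ?ex = "\<lambda>i. AEx (Op1 code_bound (Var i))"
  have "finite (code ` A)" "finite inv_pairs"
    using finite_A by (simp_all add: inv_pairs_def)
  moreover have "computable 1 (\<lambda>xs. code_bound (xs ! 0))"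
    by (rule computable1_aexp[of "Op2 (^) (Const base) (Op1 Suc (Op1 (radix_len base) (Var 0)))"])
       (auto simp: computable_arith computable_Suc computable_radix_len code_bound_def)
  ultimately show ?thesis
    by (intro computable2_aexp[of "AConj (?code 0) (ADisj
         (AConj (ALess (?len 0) (Const K)) (Op1 (\<lambda>c. of_bool (c \<in> short_codes)) (Var 0)))
         (?ex 0 (?ex 1 (?ex 2 (?ex 3 (?ex 4 (AConjs
           [?code 4, ?code 3, ?code 2, ?code 1, ?code 0,
            AEq (Var 5) (?app (?app (Var 4) (Var 3)) (Var 2)),
            ALess (?len 1) (?len 3), ALess (Op2 (+) (?len 1) (?len 3)) (?len 5),
            Op2 (\<lambda>s t. of_bool (radix_reverse_rel base inv_pairs s t)) (Var 1) (Var 0),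
            ?mem (Var 6) (?app (Var 3) (Var 0)),
            ?mem (Var 6) (?app (?app (Var 4) (Var 1)) (Var 2))])))))))"])
       (auto simp: computable_is_radix_code computable_radix_len computable_radix_append
         computable_radix_reverse_rel computable_member computable_set_decode_member
         computable_add finite_short_codes coded_step_def split_codes_def)
qed

lemma split_codes_wcode:
  assumes "w \<in> lists A" "x \<in> lists A" "y \<in> lists A" "z \<in> lists A" "s \<in> lists A" "t \<in> lists A"
  shows "split_codes (wcode w) h (wcode x) (wcode y) (wcode z) (wcode s) (wcode t) \<longleftrightarrow>
    w = x @ y @ z \<and> length s < length y \<and> length s + length y < length w \<and> t = rev (map inv s) \<and>
    wcode (y @ t) \<in> set_decode h \<and> wcode (x @ s @ z) \<in> set_decode h"
proof -
  have "\<forall>c\<in>{wcode x, wcode y, wcode z, wcode s, wcode t}. is_radix_code base (code ` A) c"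
    using assms by (auto simp: is_radix_code_iff_wcode)
  moreover have
    "radix_append base (radix_append base (wcode x) (wcode y)) (wcode z) = wcode (x @ y @ z)"
    "radix_append base (wcode y) (wcode t) = wcode (y @ t)"
    "radix_append base (radix_append base (wcode x) (wcode s)) (wcode z) = wcode (x @ s @ z)"
    using assms radix_append_wcode[of x y] radix_append_wcode[of "x @ y" z]
      radix_append_wcode[of x s] radix_append_wcode[of "x @ s" z] radix_append_wcode[of y t]
    by simp_all
  moreover have "wcode w = wcode (x @ y @ z) \<longleftrightarrow> w = x @ y @ z"
    using assms wcode_inj[of w "x @ y @ z"] by auto
  ultimately show ?thesis
    unfolding split_codes_def
    by (simp only: assms radix_len_wcode radix_reverse_rel_wcode simp_thms) blast
qed

lemma splits_if_split_codes:
  assumes w: "w \<in> lists A" and h: "\<And>u. u < wcode w \<Longrightarrow> u \<in> set_decode h \<longleftrightarrow> coded u"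
    and codes: "split_codes (wcode w) h cx cy cz cs ct"
  shows "splits w"
proof -
  from codes have "\<forall>c\<in>{cx, cy, cz, cs, ct}. \<exists>u\<in>lists A. c = wcode u"
    unfolding split_codes_def is_radix_code_iff_wcode by blast
  then obtain x y z s t
    where xyzst: "x \<in> lists A" "y \<in> lists A" "z \<in> lists A" "s \<in> lists A" "t \<in> lists A"
    and "cx = wcode x" "cy = wcode y" "cz = wcode z" "cs = wcode s" "ct = wcode t"
    by (simp only: ball_simps) blast
  with codes have "split_codes (wcode w) h (wcode x) (wcode y) (wcode z) (wcode s) (wcode t)"
    by simp
  then have split: "w = x @ y @ z" "length s < length y" "length s + length y < length w"
    "t = rev (map inv s)" "wcode (y @ t) \<in> set_decode h" "wcode (x @ s @ z) \<in> set_decode h"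
    unfolding split_codes_wcode[OF w xyzst] by blast+
  have in_A: "y @ t \<in> lists A" "x @ s @ z \<in> lists A" using xyzst by simp_all
  have less: "wcode (y @ t) < wcode w" "wcode (x @ s @ z) < wcode w"
    by (rule wcode_less; use split xyzst w in simp)+
  have "W (y @ t)"
    using h[OF less(1)] split(5) coded_wcode[OF in_A(1)] by blast
  moreover have "W (x @ s @ z)"
    using h[OF less(2)] split(6) coded_wcode[OF in_A(2)] by blast
  ultimately show "splits w"
    using split xyzst unfolding splits_def by blast
qed

lemma split_codes_if_splits:
  assumes w: "w \<in> lists A" and h: "\<And>u. u < wcode w \<Longrightarrow> u \<in> set_decode h \<longleftrightarrow> coded u"
    and "splits w"
  shows "\<exists>x<code_bound (wcode w). \<exists>y<code_bound (wcode w). \<exists>z<code_bound (wcode w).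
    \<exists>s<code_bound (wcode w). \<exists>t<code_bound (wcode w). split_codes (wcode w) h x y z s t"
proof -
  obtain x y z s where split: "w = x @ y @ z" "s \<in> lists A" "length s < length y"
    "length s + length y < length w" "W (y @ rev (map inv s))" "W (x @ s @ z)"
    using \<open>splits w\<close> unfolding splits_def by blast
  have bound: "wcode u < code_bound (wcode w)" if "u \<in> lists A" "length u \<le> length w" for u
    using wcode_less_power[OF that] radix_len_wcode[OF w] by (simp add: code_bound_def)
  define t where "t = rev (map inv s)"
  have xyzt: "x \<in> lists A" "y \<in> lists A" "z \<in> lists A" "t \<in> lists A"
    using w split(1,2) inv_in_A by (auto simp: t_def)
  have in_A: "y @ t \<in> lists A" "x @ s @ z \<in> lists A" using xyzt split(2) by simp_all
  have less: "wcode (y @ t) < wcode w" "wcode (x @ s @ z) < wcode w"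
    by (rule wcode_less; use split xyzt w in \<open>simp add: t_def\<close>)+
  have "wcode (y @ t) \<in> set_decode h"
    using h[OF less(1)] coded_wcode[OF in_A(1)] split(5) unfolding t_def by blast
  moreover have "wcode (x @ s @ z) \<in> set_decode h"
    using h[OF less(2)] coded_wcode[OF in_A(2)] split(6) by blast
  ultimately have "split_codes (wcode w) h (wcode x) (wcode y) (wcode z) (wcode s) (wcode t)"
    using split_codes_wcode[OF w xyzt(1-3) split(2) xyzt(4)] split by (simp add: t_def)
  moreover have "wcode x < code_bound (wcode w)" "wcode y < code_bound (wcode w)"
    "wcode z < code_bound (wcode w)" "wcode s < code_bound (wcode w)"
    "wcode t < code_bound (wcode w)"
    using bound xyzt split by (simp_all add: t_def)
  ultimately show ?thesis by blast
qed

lemma coded_iff_coded_step: "coded v \<longleftrightarrow> coded_step v (set_encode {u. u < v \<and> coded u})"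
proof (cases "is_radix_code base (code ` A) v")
  case False
  then show ?thesis unfolding coded_step_def coded_def is_radix_code_iff_wcode by blast
next
  case True
  then obtain w where w: "w \<in> lists A" and v: "v = wcode w"
    unfolding is_radix_code_iff_wcode by blast
  have "u \<in> set_decode (set_encode {u. u < wcode w \<and> coded u}) \<longleftrightarrow> coded u" if "u < wcode w" for u
    using that by simp
  note h = this
  have split: "(\<exists>x<code_bound (wcode w). \<exists>y<code_bound (wcode w). \<exists>z<code_bound (wcode w).
      \<exists>s<code_bound (wcode w). \<exists>t<code_bound (wcode w).
        split_codes (wcode w) (set_encode {u. u < wcode w \<and> coded u}) x y z s t) \<longleftrightarrow> splits w"
    using split_codes_if_splits[OF w h] splits_if_split_codes[OF w h] by blast
  have "coded v \<longleftrightarrow> length w < K \<and> W w \<or> splits w"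
    using coded_wcode W_iff_short_or_splits w v by blast
  also have "\<dots> \<longleftrightarrow> coded_step v (set_encode {u. u < v \<and> coded u})"
    using True w unfolding v coded_step_def
    by (simp add: radix_len_wcode wcode_in_short_codes split)
  finally show ?thesis .
qed

theorem decidable_set_codes: "decidable_set ((\<lambda>w. list_encode (map code w)) ` {w \<in> lists A. W w})"
proof -
  have "total_recursive (\<lambda>v. of_bool (coded v))"
    by (rule total_recursive_course_of_values[OF computable_coded_step])
       (unfold zero_less_of_bool_iff, rule coded_iff_coded_step)
  then have "computable 1 (\<lambda>xs. of_bool (set (list_decode (xs ! 0)) \<subseteq> code ` A \<and>
      coded (radix_code base (list_decode (xs ! 0)))))"
    using finite_A
    by (intro computable1_aexp[of
         "AConj (Op1 (\<lambda>c. of_bool (set (list_decode c) \<subseteq> code ` A)) (Var 0))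
         (Op1 (\<lambda>v. of_bool (coded v)) (Op1 (\<lambda>c. radix_code base (list_decode c)) (Var 0)))"])
       (auto simp: total_recursive_iff_computable computable_list_decode_subset
         computable_radix_code_list_decode)
  moreover have "c \<in> (\<lambda>w. list_encode (map code w)) ` {w \<in> lists A. W w} \<longleftrightarrow>
      set (list_decode c) \<subseteq> code ` A \<and> coded (radix_code base (list_decode c))" for c
  proof
    assume "c \<in> (\<lambda>w. list_encode (map code w)) ` {w \<in> lists A. W w}"
    then show "set (list_decode c) \<subseteq> code ` A \<and> coded (radix_code base (list_decode c))"
      using coded_wcode by (auto simp: in_lists_conv_set)
  next
    assume c: "set (list_decode c) \<subseteq> code ` A \<and> coded (radix_code base (list_decode c))"
    then have "list_decode c \<in> lists (code ` A)" by (auto simp: in_lists_conv_set)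
    then obtain w where "w \<in> lists A" "list_decode c = map code w"
      unfolding lists_image by blast
    moreover from this c have "W w" using coded_wcode by simp
    moreover have "c = list_encode (map code w)"
      using \<open>list_decode c = map code w\<close> by (metis list_decode_inverse)
    ultimately show "c \<in> (\<lambda>w. list_encode (map code w)) ` {w \<in> lists A. W w}" by blast
  qed
  ultimately show ?thesis
    unfolding decidable_set_def total_recursive_iff_computable of_bool_def[symmetric] by simp
qed

end

section \<open>The word problem\<close>

definition letter_code :: "('a \<Rightarrow> nat) \<Rightarrow> 'a \<times> bool \<Rightarrow> nat" where
  "letter_code idx = (\<lambda>(a, b). 2 * idx a + (if b then 1 else 0))"

lemma word_code_eq: "word_code idx w = list_encode (map (letter_code idx) w)"
  by (simp add: word_code_def letter_code_def)

lemma inj_on_letter_code: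
  assumes "inj_on idx S"
  shows "inj_on (letter_code idx) (letters S)"
proof (rule inj_onI)
  fix x y assume xy: "x \<in> letters S" "y \<in> letters S" "letter_code idx x = letter_code idx y"
  obtain a b a' b' where x: "x = (a, b)" and y: "y = (a', b')" by fastforce
  have "(2 * idx a + (if b then 1 else 0)) mod 2 = (2 * idx a' + (if b' then 1 else 0)) mod 2"
    using xy(3) by (simp add: x y letter_code_def)
  then have "b = b'" by (cases b; cases b') simp_all
  with xy(3) have "idx a = idx a'" by (simp add: x y letter_code_def)
  with assms xy have "a = a'" unfolding x y letters_def by (auto dest: inj_onD)
  with \<open>b = b'\<close> show "x = y" by (simp add: x y)
qed

lemma solvable_word_problem_if_chordal:
  assumes "finite S" and "chordal S R k"
  shows "solvable_word_problem S R"
  unfolding solvable_word_problem_def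
proof (intro allI impI)
  fix idx :: "'a \<Rightarrow> nat"
  assume idx: "inj_on idx S"
  interpret decomposable_language "letters S" flip "letter_code idx" "max k 3" "in_ncl S R"
  proof
    show "finite (letters S)" using assms(1) by (simp add: letters_def)
    show "inj_on (letter_code idx) (letters S)" by (rule inj_on_letter_code[OF idx])
    show "flip a \<in> letters S" if "a \<in> letters S" for a using that by (rule flip_in_letters)
  next
    fix w assume "max k 3 \<le> length w" and "in_ncl S R w"
    then show "\<exists>x y z s. w = x @ y @ z \<and> s \<in> lists (letters S) \<and> length s < length y \<and>
        length s + length y < length w \<and> in_ncl S R (y @ rev (map flip s)) \<and> in_ncl S R (x @ s @ z)"
      using chordal_split[OF assms(2)] unfolding winv_def by metis
  next
    fix x y z s
    assume "x @ y @ z \<in> lists (letters S)"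
      and "in_ncl S R (y @ rev (map flip s))" and "in_ncl S R (x @ s @ z)"
    then show "in_ncl S R (x @ y @ z)"
      using area_replace_le(1) unfolding winv_def by metis
  qed
  have "word_code idx ` {w. in_ncl S R w} =
      (\<lambda>w. list_encode (map (letter_code idx) w)) ` {w \<in> lists (letters S). in_ncl S R w}"
    by (auto simp: word_code_eq in_ncl_def)
  then show "decidable_set (word_code idx ` {w. in_ncl S R w})"
    using decidable_set_codes by simp
qed

theorem theorem15:
  fixes S :: "'a set" and R :: "'a word set"
  assumes "finite S" and "finite R" and "R \<subseteq> lists (letters S)"
    and "\<exists>k. chordal S R k"
  shows "(\<exists>f. total_recursive f \<and> isoperimetric S R f) \<and> solvable_word_problem S R"
proof -
  obtain k where chordal: "chordal S R k" using assms(4) by blast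
  obtain C where C: "\<And>w. in_ncl S R w \<Longrightarrow> area S R w \<le> C * 2 ^ length w"
    using area_le_exp[OF assms(1) chordal] by blast
  have "mono (\<lambda>n. C * 2 ^ n)"
    by (intro monoI mult_le_mono2 power_increasing) auto
  with C have "isoperimetric S R (\<lambda>n. C * 2 ^ n)"
    unfolding isoperimetric_def using dehn_le[OF assms(1)] by blast
  moreover have "total_recursive (\<lambda>n. C * 2 ^ n)"
    unfolding total_recursive_iff_computable
    by (rule computable1_aexp[of "Op2 (*) (Const C) (Op2 (^) (Const 2) (Var 0))"])
       (auto simp: computable_arith)
  ultimately show ?thesis
    using solvable_word_problem_if_chordal[OF assms(1) chordal] by blast
qed

end
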